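(* Assume $\mu$ satisfies $(\mathrm H_\mu)$, and let $b_n,h_n$ be as in the context. Let $\mathcal H$ be the height of an (unconditioned) $\mu$-Bienaymé tree and $Q_x=\mathbf P(\mathcal H\ge x)$ for $x\ge0$. Then for every $\varepsilon>0$, as $n\to\infty$, \[ b_n\,Q_{(1+\varepsilon)h_n}\to0\qquad\text{and}\qquad b_n\,Q_{(1-\varepsilon)h_n}\to\infty. \]
   Context: Condition $(\mathrm H_\mu)$: $\mu=(\mu_k)_{k\ge0}$ is a probability measure on $\mathbb Z_+$ with $\sum_k k\mu_k=1$, and there is a slowly varying function $L:\mathbb R_+\to\mathbb R_+$ with $\mu_n=L(n)/n^2$ for all $n\ge1$. Let $Y\sim\mu$, $X=Y-1$, $(a_n)$ a sequence with $n\mathbf P(Y\ge a_n)\to1$, $b_n=n\,\mathbf E[X\mathbf 1_{\{|X|>a_n\}}]$ and $h_n=\int_1^{n\mathbf E[Y\mathbf 1_{\{Y\ge a_n\}}]}\frac{\mathrm dx}{x\mathbf E[Y\mathbf 1_{\{Y\ge x\}}]}$. A $\mu$-Bienaymé tree is the family tree of a Galton–Watson process with offspring law $\mu$ started from one individual; its height is the maximal distance of a vertex from the root. *)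

theory Defs
  imports "HOL-Probability.Probability"
begin

definition slowly_varying :: "(real \<Rightarrow> real) \<Rightarrow> bool" where
  "slowly_varying L \<longleftrightarrow> L \<in> borel_measurable borel \<and> (\<forall>x>0. L x > 0) \<and>
     (\<forall>c>0. ((\<lambda>x. L (c * x) / L x) \<longlongrightarrow> 1) at_top)"

definition H_mu :: "nat pmf \<Rightarrow> bool" where
  "H_mu \<mu> \<longleftrightarrow> (\<lambda>k. real k * pmf \<mu> k) sums 1 \<and>
     (\<exists>L. slowly_varying L \<and> (\<forall>n\<ge>1. pmf \<mu> n = L (real n) / (real n)^2))"

primrec conv_pow :: "nat pmf \<Rightarrow> nat \<Rightarrow> nat pmf" where
  "conv_pow \<mu> 0 = return_pmf 0"
| "conv_pow \<mu> (Suc k) = bind_pmf \<mu> (\<lambda>a. map_pmf (\<lambda>s. a + s) (conv_pow \<mu> k))"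

text \<open>Law of the generation size Z_n of the Galton--Watson (Bienayme) process
  with offspring law mu started from one individual.\<close>
primrec gw_gen :: "nat pmf \<Rightarrow> nat \<Rightarrow> nat pmf" where
  "gw_gen \<mu> 0 = return_pmf 1"
| "gw_gen \<mu> (Suc n) = bind_pmf (gw_gen \<mu> n) (conv_pow \<mu>)"

text \<open>Q_x = P(height >= x): the height (an integer, possibly infinite) is >= x
  iff generation ceil(x) is non-empty.\<close>
definition height_tail :: "nat pmf \<Rightarrow> real \<Rightarrow> real" where
  "height_tail \<mu> x = measure_pmf.prob (gw_gen \<mu> (nat \<lceil>x\<rceil>)) {z. z > 0}"

definition b_seq :: "nat pmf \<Rightarrow> (nat \<Rightarrow> real) \<Rightarrow> nat \<Rightarrow> real" where
  "b_seq \<mu> a n = real n * measure_pmf.expectation \<mu>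
      (\<lambda>k. (real k - 1) * (if \<bar>real k - 1\<bar> > a n then 1 else 0))"

definition trunc_mean :: "nat pmf \<Rightarrow> real \<Rightarrow> real" where
  "trunc_mean \<mu> x = measure_pmf.expectation \<mu> (\<lambda>k. real k * (if real k \<ge> x then 1 else 0))"

definition h_seq :: "nat pmf \<Rightarrow> (nat \<Rightarrow> real) \<Rightarrow> nat \<Rightarrow> real" where
  "h_seq \<mu> a n = (LBINT x=1..(real n * trunc_mean \<mu> (a n)). 1 / (x * trunc_mean \<mu> x))"

end

theory Submission
  imports Defs
begin

(* Write Q m for the probability that the tree survives to generation m and f for the generating
   function of mu, so that Q (m + 1) = Q m - D (Q m) with D u = f (1 - u) - (1 - u). Under (H_mu)
   the truncated mean ell x = E[Y 1{Y >= x}] is slowly varying and D u ~ u ell (1/u) as u -> 0.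
   Hence, for Phi y = integral from 1 to y of dx / (x ell x), each step of the recursion increases
   Phi (1 / Q m) by 1 + o(1), i.e. Phi (1 / Q m) = (1 + o(1)) m. Moreover h_n = Phi y_n for
   y_n = n ell (a_n), and b_n is comparable to y_n. Finally Phi (K y) - Phi y <= ln K / ell (K y)
   is o(Phi y) because Phi y * ell (K y) -> infinity, so moving Phi by eps Phi y_n moves its
   argument by more than any constant factor K: at (1 + eps) h_n the survival probability is
   below 1 / (K y_n), at (1 - eps) h_n above K / y_n. *)

lemma finite_nat_less_real: "finite {k :: nat. real k < x}"
  by (rule finite_subset[of _ "{..<nat \<lceil>x\<rceil>}"]) (auto simp: less_ceiling_iff zless_nat_eq_int_zless)

lemma card_nat_doubling_interval:
  assumes "y \<ge> 1"
  shows "y - 1 \<le> real (card {k :: nat. y \<le> real k \<and> real k < 2 * y}) \<and>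
         real (card {k :: nat. y \<le> real k \<and> real k < 2 * y}) \<le> y + 1"
proof -
  have eq: "{k :: nat. y \<le> real k \<and> real k < 2 * y} = {nat \<lceil>y\<rceil>..<nat \<lceil>2 * y\<rceil>}"
    by (auto simp: ceiling_le_iff less_ceiling_iff nat_le_iff le_nat_iff zless_nat_eq_int_zless)
  have "\<lceil>y\<rceil> \<le> \<lceil>2 * y\<rceil>" using assms by (intro ceiling_mono) simp
  then have "real (card {nat \<lceil>y\<rceil>..<nat \<lceil>2 * y\<rceil>}) = of_int \<lceil>2 * y\<rceil> - of_int \<lceil>y\<rceil>"
    using assms by (simp add: nat_le_iff)
  then show ?thesis
    unfolding eq using ceiling_correct[of y] ceiling_correct[of "2 * y"] by linarith
qed

lemma filterlim_two_power_at_top: "filterlim (\<lambda>j :: nat. (2 :: real) ^ j) at_top sequentially"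
proof (rule filterlim_at_top_mono[OF filterlim_real_sequentially], intro always_eventually allI)
  fix j :: nat
  have "real j < real (2 ^ j)" using less_exp[of j] by (simp only: of_nat_less_iff)
  then show "real j \<le> 2 ^ j" by simp
qed

lemma ex_power_two_bracket:
  fixes x :: real
  assumes "x \<ge> 1"
  shows "\<exists>j. 2 ^ j \<le> x \<and> x < 2 ^ Suc j"
proof -
  have "1 \<le> nat \<lfloor>x\<rfloor>" using assms by (simp add: le_nat_iff)
  then obtain j where j: "2 ^ j \<le> nat \<lfloor>x\<rfloor>" "nat \<lfloor>x\<rfloor> < 2 ^ Suc j"
    using ex_power_ivl1[of 2 "nat \<lfloor>x\<rfloor>"] by auto
  moreover have "real (nat \<lfloor>x\<rfloor>) \<le> x" "x < real (nat \<lfloor>x\<rfloor>) + 1" using assms by linarith+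
  ultimately have "real (2 ^ j) \<le> x" "x < real (2 ^ Suc j)"
    by (metis of_nat_le_iff order_trans,
        metis Suc_leI add.commute less_le_trans of_nat_Suc of_nat_le_iff)
  then have "2 ^ j \<le> x \<and> x < 2 ^ Suc j" by simp
  then show ?thesis by blast
qed

lemma one_minus_power_le_quadratic:
  fixes u :: real
  assumes "0 \<le> u" "u \<le> 1"
  shows "(1 - u) ^ k \<le> 1 - real k * u + (real k)\<^sup>2 * u\<^sup>2"
proof (induction k)
  case (Suc k)
  have "(1 - u) ^ Suc k \<le> (1 - u) * (1 - real k * u + (real k)\<^sup>2 * u\<^sup>2)"
    using Suc assms by (simp add: mult_left_mono)
  also have "\<dots> \<le> 1 - real (Suc k) * u + (real (Suc k))\<^sup>2 * u\<^sup>2"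
  proof -
    have "0 \<le> (real k)\<^sup>2 * u ^ 3 + (real k + 1) * u\<^sup>2"
      using assms by simp
    then show ?thesis by (simp add: algebra_simps power2_eq_square power3_eq_cube)
  qed
  finally show ?case .
qed simp

lemma ratio_le_one_plus_six_mult:
  fixes \<delta> :: real
  assumes "0 \<le> \<delta>" "\<delta> \<le> 1 / 10"
  shows "(1 + \<delta>) / ((1 - 2 * \<delta>) * (1 - \<delta>)) \<le> 1 + 6 * \<delta>"
proof -
  have "0 \<le> \<delta> * (2 - 16 * \<delta>) + 12 * \<delta> ^ 3" using assms by simp
  then have "1 + \<delta> \<le> (1 + 6 * \<delta>) * ((1 - 2 * \<delta>) * (1 - \<delta>))"
    by (simp add: algebra_simps power3_eq_cube)
  moreover have "0 < (1 - 2 * \<delta>) * (1 - \<delta>)" using assms by simp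
  ultimately show ?thesis by (simp add: divide_le_eq)
qed

lemma tendsto_0_if_contracting:
  fixes r :: "nat \<Rightarrow> real" and c :: real
  assumes nonneg: "\<And>j. 0 \<le> r j" and c: "0 \<le> c" "c < 1"
    and contr: "\<And>\<epsilon>. \<epsilon> > 0 \<Longrightarrow> eventually (\<lambda>j. r (Suc j) \<le> c * r j + \<epsilon>) sequentially"
  shows "r \<longlonglongrightarrow> 0"
proof (rule tendstoI)
  fix \<epsilon> :: real assume "\<epsilon> > 0"
  then obtain j0 where j0: "\<And>j. j \<ge> j0 \<Longrightarrow> r (Suc j) \<le> c * r j + (1 - c) * \<epsilon> / 2"
    using contr[of "(1 - c) * \<epsilon> / 2"] c unfolding eventually_sequentially by auto
  have iter: "r (j0 + n) \<le> c ^ n * r j0 + \<epsilon> / 2" for n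
  proof (induction n)
    case (Suc n)
    have "r (j0 + Suc n) \<le> c * r (j0 + n) + (1 - c) * \<epsilon> / 2" using j0[of "j0 + n"] by simp
    also have "\<dots> \<le> c * (c ^ n * r j0 + \<epsilon> / 2) + (1 - c) * \<epsilon> / 2"
      using Suc c by (intro add_right_mono mult_left_mono) auto
    also have "\<dots> = c ^ Suc n * r j0 + \<epsilon> / 2" by (simp add: field_simps)
    finally show ?case .
  qed (use \<open>\<epsilon> > 0\<close> in simp)
  have "(\<lambda>n. c ^ n * r j0) \<longlonglongrightarrow> 0 * r j0"
    using c by (intro tendsto_mult tendsto_const LIMSEQ_power_zero) auto
  then have "eventually (\<lambda>n. c ^ n * r j0 < \<epsilon> / 2) sequentially"
    using \<open>\<epsilon> > 0\<close> by (intro order_tendstoD(2)) auto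
  then obtain n0 where n0: "\<And>n. n \<ge> n0 \<Longrightarrow> c ^ n * r j0 < \<epsilon> / 2"
    unfolding eventually_sequentially by blast
  have "r j < \<epsilon>" if "j \<ge> j0 + n0" for j
  proof -
    have "r j \<le> c ^ (j - j0) * r j0 + \<epsilon> / 2" using iter[of "j - j0"] that by simp
    moreover have "n0 \<le> j - j0" using that by simp
    ultimately show ?thesis using n0 by fastforce
  qed
  then show "eventually (\<lambda>j. dist (r j) 0 < \<epsilon>) sequentially"
    unfolding eventually_sequentially using nonneg by (auto intro!: exI[of _ "j0 + n0"])
qed

lemma linear_bounds_if_eventually_increments:
  fixes a :: "nat \<Rightarrow> real"
  assumes "eventually (\<lambda>m. c \<le> a (Suc m) - a m \<and> a (Suc m) - a m \<le> d) sequentially"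
  shows "\<exists>C\<ge>0. \<forall>m. c * real m - C \<le> a m \<and> a m \<le> d * real m + C"
proof -
  obtain m0 where m0: "\<And>m. m \<ge> m0 \<Longrightarrow> c \<le> a (Suc m) - a m \<and> a (Suc m) - a m \<le> d"
    using assms unfolding eventually_sequentially by blast
  have tele: "c * real n \<le> a (m0 + n) - a m0 \<and> a (m0 + n) - a m0 \<le> d * real n" for n
  proof (induction n)
    case (Suc n)
    then show ?case using m0[of "m0 + n"] by (simp add: algebra_simps)
  qed simp
  define C where "C = (\<Sum>i\<le>m0. \<bar>a i\<bar>) + (\<bar>c\<bar> + \<bar>d\<bar>) * real m0"
  have "C \<ge> 0" unfolding C_def by (intro add_nonneg_nonneg sum_nonneg mult_nonneg_nonneg) auto
  have a_le: "\<bar>a i\<bar> \<le> (\<Sum>i\<le>m0. \<bar>a i\<bar>)" if "i \<le> m0" for i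
    using that by (intro member_le_sum) auto
  have "c * real m - C \<le> a m \<and> a m \<le> d * real m + C" for m
  proof (cases "m \<ge> m0")
    case True
    then obtain n where n: "m = m0 + n" using le_Suc_ex by blast
    have "\<bar>c * real m0\<bar> \<le> (\<bar>c\<bar> + \<bar>d\<bar>) * real m0" "\<bar>d * real m0\<bar> \<le> (\<bar>c\<bar> + \<bar>d\<bar>) * real m0"
      by (simp_all add: abs_mult mult_right_mono)
    then show ?thesis using tele[of n] a_le[of m0] unfolding n C_def by (simp add: algebra_simps) arith
  next
    case False
    have "\<bar>c * real m\<bar> \<le> (\<bar>c\<bar> + \<bar>d\<bar>) * real m0" "\<bar>d * real m\<bar> \<le> (\<bar>c\<bar> + \<bar>d\<bar>) * real m0"
      using False by (simp_all add: abs_mult mult_mono)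
    then show ?thesis using a_le[of m] False unfolding C_def by arith
  qed
  then show ?thesis using \<open>C \<ge> 0\<close> by blast
qed

lemma interval_integral_inverse:
  assumes "0 < y" "y \<le> z"
  shows "(LBINT x=y..z. 1 / x) = ln z - ln y"
proof (rule interval_integral_FTC_finite)
  show "continuous_on {min y z..max y z} (\<lambda>x. 1 / x)"
    using assms by (intro continuous_intros) auto
  fix x assume "min y z \<le> x" "x \<le> max y z"
  then have "(ln has_real_derivative 1 / x) (at x)" using assms by (intro DERIV_ln_divide) auto
  then show "(ln has_vector_derivative 1 / x) (at x within {min y z..max y z})"
    by (simp add: has_real_derivative_iff_has_vector_derivative has_vector_derivative_at_within)
qed

section \<open>Generating functions and survival probabilities\<close>

lemma pmf_nat_expectation_sums:
  fixes M :: "nat pmf" and f :: "nat \<Rightarrow> real"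
  assumes "summable (\<lambda>k. pmf M k * \<bar>f k\<bar>)"
  shows "(\<lambda>k. pmf M k * f k) sums measure_pmf.expectation M f"
proof -
  have "measure_pmf.expectation M f = integral\<^sup>L (count_space UNIV) (\<lambda>k. pmf M k * f k)"
    unfolding measure_pmf_eq_density by (subst integral_density) auto
  moreover have "integrable (count_space UNIV) (\<lambda>k. pmf M k * f k)"
    using assms by (subst integrable_count_space_nat_iff) (simp add: abs_mult)
  ultimately show ?thesis using sums_integral_count_space_nat by metis
qed

lemma summable_pmf_nat: "summable (pmf (M :: nat pmf))"
  using pmf_abs_summable[of M UNIV] abs_summable_on_nat_iff'[of "pmf M"] by simp

lemma pmf_nat_prob_sums:
  fixes M :: "nat pmf"
  shows "(\<lambda>k. if k \<in> A then pmf M k else 0) sums measure_pmf.prob M A"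
proof -
  have "(\<lambda>k. pmf M k * indicator A k) sums measure_pmf.expectation M (indicator A)"
    by (rule pmf_nat_expectation_sums, rule summable_comparison_test'[of "pmf M"])
       (auto simp: indicator_def summable_pmf_nat)
  moreover have "(\<lambda>k. pmf M k * indicator A k) = (\<lambda>k. if k \<in> A then pmf M k else 0)"
    by (auto simp: indicator_def)
  ultimately show ?thesis by simp
qed

lemma pmf_nat_sums_1: "pmf (M :: nat pmf) sums 1"
  using pmf_nat_prob_sums[of UNIV M] by simp

definition pgf :: "nat pmf \<Rightarrow> real \<Rightarrow> real" where
  "pgf M s = (\<Sum>k. pmf M k * s ^ k)"

lemma pgf_sums: "\<bar>s\<bar> \<le> 1 \<Longrightarrow> (\<lambda>k. pmf M k * s ^ k) sums pgf M s"
  unfolding pgf_def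
  by (rule summable_sums, rule summable_comparison_test'[OF summable_pmf_nat])
     (auto simp: abs_mult power_abs intro!: mult_left_le power_le_one)

lemma pgf_bounds: "0 \<le> s \<Longrightarrow> s \<le> 1 \<Longrightarrow> 0 \<le> pgf M s \<and> pgf M s \<le> 1"
proof -
  assume s: "0 \<le> s" "s \<le> 1"
  have "pgf M s \<le> 1"
    by (rule sums_le[OF _ pgf_sums pmf_nat_sums_1]) (use s in \<open>auto intro!: mult_left_le power_le_one\<close>)
  moreover have "0 \<le> pgf M s"
    using pgf_sums[of s M] s unfolding pgf_def by (intro suminf_nonneg) (auto simp: sums_iff)
  ultimately show ?thesis by simp
qed

lemma pgf_funpow_bounds: "0 \<le> s \<Longrightarrow> s \<le> 1 \<Longrightarrow> 0 \<le> (pgf M ^^ m) s \<and> (pgf M ^^ m) s \<le> 1"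
  by (induction m) (auto simp: pgf_bounds)

lemma nn_integral_power_eq_pgf:
  assumes "0 \<le> s" "s \<le> 1"
  shows "(\<integral>\<^sup>+z. ennreal (s ^ z) \<partial>measure_pmf M) = ennreal (pgf M s)"
proof -
  have "(\<integral>\<^sup>+z. ennreal (s ^ z) \<partial>measure_pmf M) = (\<Sum>z. ennreal (pmf M z * s ^ z))"
    by (simp add: nn_integral_measure_pmf ennreal_mult' assms nn_integral_count_space_nat)
  also have "\<dots> = ennreal (pgf M s)"
    using pgf_sums[of s M] assms unfolding pgf_def by (intro suminf_ennreal2) (auto simp: sums_iff)
  finally show ?thesis .
qed

lemma nn_integral_power_conv_pow:
  assumes "0 \<le> s" "s \<le> 1"
  shows "(\<integral>\<^sup>+z. ennreal (s ^ z) \<partial>measure_pmf (conv_pow M k)) = ennreal (pgf M s ^ k)"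
proof (induction k)
  case (Suc k)
  have "(\<integral>\<^sup>+z. ennreal (s ^ z) \<partial>measure_pmf (conv_pow M (Suc k)))
      = (\<integral>\<^sup>+a. \<integral>\<^sup>+z. ennreal (s ^ a) * ennreal (s ^ z) \<partial>measure_pmf (conv_pow M k) \<partial>measure_pmf M)"
    using assms by (simp add: power_add ennreal_mult)
  also have "\<dots> = ennreal (pgf M s) * ennreal (pgf M s ^ k)"
    by (simp add: nn_integral_cmult nn_integral_multc Suc nn_integral_power_eq_pgf assms)
  also have "\<dots> = ennreal (pgf M s ^ Suc k)"
    using pgf_bounds[OF assms] by (simp add: ennreal_mult)
  finally show ?case .
qed simp

lemma nn_integral_power_gw_gen:
  "0 \<le> s \<Longrightarrow> s \<le> 1 \<Longrightarrow>
    (\<integral>\<^sup>+z. ennreal (s ^ z) \<partial>measure_pmf (gw_gen M m)) = ennreal ((pgf M ^^ m) s)"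
proof (induction m arbitrary: s)
  case (Suc m)
  have "(\<integral>\<^sup>+z. ennreal (s ^ z) \<partial>measure_pmf (gw_gen M (Suc m)))
     = (\<integral>\<^sup>+k. ennreal (pgf M s ^ k) \<partial>measure_pmf (gw_gen M m))"
    using Suc.prems by (simp add: nn_integral_power_conv_pow)
  also have "\<dots> = ennreal ((pgf M ^^ m) (pgf M s))"
    using pgf_bounds[OF Suc.prems] by (intro Suc.IH) auto
  finally show ?case by (simp add: funpow_swap1)
qed simp

lemma pmf_gw_gen_0: "pmf (gw_gen M m) 0 = (pgf M ^^ m) 0"
proof -
  have "ennreal (pmf (gw_gen M m) 0) = (\<integral>\<^sup>+z. indicator {0} z \<partial>measure_pmf (gw_gen M m))"
    by (simp add: emeasure_pmf_single)
  also have "\<dots> = (\<integral>\<^sup>+z. ennreal ((0::real) ^ z) \<partial>measure_pmf (gw_gen M m))"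
    by (intro nn_integral_cong) (auto simp: indicator_def)
  also have "\<dots> = ennreal ((pgf M ^^ m) 0)"
    by (rule nn_integral_power_gw_gen) auto
  finally show ?thesis using pgf_funpow_bounds[where s=0] by simp
qed

definition survival :: "nat pmf \<Rightarrow> nat \<Rightarrow> real" where
  "survival M m = 1 - (pgf M ^^ m) 0"

lemma height_tail_eq_survival: "height_tail M x = survival M (nat \<lceil>x\<rceil>)"
proof -
  have "{z. z > 0} = UNIV - {0 :: nat}" by auto
  then have "height_tail M x = 1 - measure_pmf.prob (gw_gen M (nat \<lceil>x\<rceil>)) {0}"
    unfolding height_tail_def using measure_pmf.prob_compl[of "{0 :: nat}"] by simp
  then show ?thesis by (simp add: measure_pmf_single pmf_gw_gen_0 survival_def)
qed

lemma survival_bounds: "0 \<le> survival M m \<and> survival M m \<le> 1"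
  using pgf_funpow_bounds[where s=0] by (simp add: survival_def)

lemma survival_0 [simp]: "survival M 0 = 1"
  by (simp add: survival_def)

lemma survival_Suc: "survival M (Suc m) = 1 - pgf M (1 - survival M m)"
  by (simp add: survival_def)

section \<open>The uniform convergence theorem\<close>

definition large_increments :: "(real \<Rightarrow> real) \<Rightarrow> real \<Rightarrow> real \<Rightarrow> real \<Rightarrow> real \<Rightarrow> real" where
  "large_increments H B e s v = (if v \<in> {0..B} \<and> e \<le> \<bar>H (s + v) - H s\<bar> then 1 else 0)"

lemma integrable_large_increments:
  assumes [measurable]: "H \<in> borel_measurable borel"
  shows "integrable lborel (large_increments H B e s)"
proof (rule Bochner_Integration.integrable_bound)
  show "integrable lborel (indicator {0..B} :: real \<Rightarrow> real)"
    by (intro integrable_real_indicator) (auto simp: emeasure_lborel_Icc_eq)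
  show "large_increments H B e s \<in> borel_measurable lborel"
    unfolding large_increments_def by measurable
qed (auto simp: large_increments_def)

lemma integral_large_increments_tendsto_0:
  assumes [measurable]: "H \<in> borel_measurable borel"
    and incr: "\<And>v. v \<ge> 0 \<Longrightarrow> ((\<lambda>t. H (t + v) - H t) \<longlongrightarrow> 0) at_top"
    and s: "filterlim s at_top sequentially" and "e > 0"
  shows "(\<lambda>n. integral\<^sup>L lborel (large_increments H B e (s n))) \<longlonglongrightarrow> 0"
proof -
  have pointwise: "(\<lambda>n. large_increments H B e (s n) v) \<longlonglongrightarrow> 0" for v
  proof (cases "v \<in> {0..B}")
    case True
    have "(\<lambda>n. H (s n + v) - H (s n)) \<longlonglongrightarrow> 0"
      using filterlim_compose[OF incr s] True by auto
    then have "eventually (\<lambda>n. \<bar>H (s n + v) - H (s n)\<bar> < e) sequentially"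
      using \<open>e > 0\<close> by (auto dest!: tendstoD[where e=e] simp: dist_real_def)
    then have "eventually (\<lambda>n. large_increments H B e (s n) v = 0) sequentially"
      by eventually_elim (auto simp: large_increments_def)
    then show ?thesis by (rule tendsto_eventually)
  next
    case False
    then have "(\<lambda>n. large_increments H B e (s n) v) = (\<lambda>n. 0)" by (auto simp: large_increments_def)
    then show ?thesis by simp
  qed
  have W: "integrable lborel (indicator {0..B} :: real \<Rightarrow> real)"
    by (intro integrable_real_indicator) (auto simp: emeasure_lborel_Icc_eq)
  have meas: "large_increments H B e (s n) \<in> borel_measurable lborel" for n
    unfolding large_increments_def by measurable
  have bound: "AE x in lborel. norm (large_increments H B e (s n) x) \<le> indicator {0..B} x" for n
    by (simp add: large_increments_def)
  have "(\<lambda>n. integral\<^sup>L lborel (large_increments H B e (s n))) \<longlonglongrightarrow> integral\<^sup>L lborel (\<lambda>_::real. 0::real)"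
    by (rule integral_dominated_convergence[OF _ meas W _ bound]) (auto simp: pointwise)
  then show ?thesis by simp
qed

text \<open>Every \<open>x \<in> [A, 2A]\<close> is a point of large increment from \<open>t\<close> or from \<open>t + u\<close>.\<close>
lemma large_increments_cover:
  assumes [measurable]: "H \<in> borel_measurable borel"
    and u: "u \<in> {0..A}" and jump: "e < \<bar>H (t + u) - H t\<bar>"
  shows "A \<le> integral\<^sup>L lborel (large_increments H (2 * A) (e / 2) t)
    + integral\<^sup>L lborel (large_increments H (2 * A) (e / 2) (t + u))"
proof -
  let ?F = "large_increments H (2 * A) (e / 2) t" and ?G = "large_increments H (2 * A) (e / 2) (t + u)"
  have G_shift: "integrable lborel (\<lambda>x. ?G (x - u))"
      "integral\<^sup>L lborel (\<lambda>x. ?G (x - u)) = integral\<^sup>L lborel ?G"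
    using lborel_integrable_real_affine[OF integrable_large_increments, where c=1 and t="- u"]
      lborel_integral_real_affine[of 1 ?G "- u"] by simp_all
  have "A \<le> integral\<^sup>L lborel (indicator {A..2 * A} :: real \<Rightarrow> real)"
    using u by simp
  also have "\<dots> \<le> integral\<^sup>L lborel (\<lambda>x. ?F x + ?G (x - u))"
  proof (rule integral_mono)
    show "integrable lborel (indicator {A..2 * A} :: real \<Rightarrow> real)"
      by (intro integrable_real_indicator) (auto simp: emeasure_lborel_Icc_eq)
    show "integrable lborel (\<lambda>x. ?F x + ?G (x - u))"
      using integrable_large_increments G_shift by auto
    fix x :: real
    have "?F x = 1 \<or> ?G (x - u) = 1" if "x \<in> {A..2 * A}"
    proof (rule ccontr)
      assume "\<not> ?thesis"
      then have "\<bar>H (t + x) - H t\<bar> < e / 2" "\<bar>H (t + x) - H (t + u)\<bar> < e / 2"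
        using that u by (auto simp: large_increments_def split: if_splits)
      then show False using jump by arith
    qed
    moreover have "0 \<le> ?F x" "0 \<le> ?G (x - u)" by (simp_all add: large_increments_def)
    ultimately show "indicator {A..2 * A} x \<le> ?F x + ?G (x - u)"
      by (cases "x \<in> {A..2 * A}") auto
  qed
  also have "\<dots> = integral\<^sup>L lborel ?F + integral\<^sup>L lborel ?G"
    using integrable_large_increments G_shift by simp
  finally show ?thesis .
qed

text \<open>The uniform convergence theorem for measurable functions, in additive form: along a
  counterexample \<open>t\<^sub>n \<rightarrow> \<infinity>\<close>, \<open>u\<^sub>n \<in> [0, A]\<close> the two sets of large increments would have vanishing
  Lebesgue measure, yet together they cover a translate of \<open>[A, 2A]\<close>.\<close>
lemma uniform_convergence_increments:
  fixes H :: "real \<Rightarrow> real"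
  assumes [measurable]: "H \<in> borel_measurable borel"
    and incr: "\<And>v. v \<ge> 0 \<Longrightarrow> ((\<lambda>t. H (t + v) - H t) \<longlongrightarrow> 0) at_top"
    and "A > 0" "e > 0"
  shows "\<exists>T. \<forall>t\<ge>T. \<forall>u\<in>{0..A}. \<bar>H (t + u) - H t\<bar> \<le> e"
proof (rule ccontr)
  assume "\<not> ?thesis"
  then have "\<forall>n::nat. \<exists>t u. t \<ge> real n \<and> u \<in> {0..A} \<and> \<bar>H (t + u) - H t\<bar> > e"
    by (meson not_le)
  then obtain t u where t: "\<And>n. t n \<ge> real n" and u: "\<And>n. u n \<in> {0..A}"
    and jump: "\<And>n. \<bar>H (t n + u n) - H (t n)\<bar> > e"
    by metis
  have t_top: "filterlim t at_top sequentially"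
    by (rule filterlim_at_top_mono[OF filterlim_real_sequentially]) (use t in auto)
  have tu_top: "filterlim (\<lambda>n. t n + u n) at_top sequentially"
    by (rule filterlim_at_top_mono[OF t_top]) (use u in auto)
  have "e / 2 > 0" using \<open>e > 0\<close> by simp
  have "(\<lambda>n. integral\<^sup>L lborel (large_increments H (2 * A) (e / 2) (t n))
      + integral\<^sup>L lborel (large_increments H (2 * A) (e / 2) (t n + u n))) \<longlonglongrightarrow> 0 + 0"
    using integral_large_increments_tendsto_0[OF _ incr _ \<open>e / 2 > 0\<close>] t_top tu_top
    by (intro tendsto_add) auto
  then have "A \<le> 0"
    using large_increments_cover[OF _ u jump] by (intro LIMSEQ_le_const) auto
  then show False using \<open>A > 0\<close> by simp
qed

lemma slowly_varying_ratio_bounded: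
  assumes sv: "slowly_varying L" and "C \<ge> 1"
  shows "\<exists>X\<ge>1. \<forall>x\<ge>X. \<forall>c\<in>{1..C}. L (c * x) \<le> exp 1 * L x \<and> L x \<le> exp 1 * L (c * x)"
proof -
  have L_pos: "x > 0 \<Longrightarrow> L x > 0" and [measurable]: "L \<in> borel_measurable borel" for x
    using sv unfolding slowly_varying_def by auto
  define H where "H t = ln (L (exp t))" for t
  have incr: "((\<lambda>t. H (t + v) - H t) \<longlongrightarrow> 0) at_top" for v
  proof -
    have "((\<lambda>x. L (exp v * x) / L x) \<longlongrightarrow> 1) at_top"
      using sv unfolding slowly_varying_def by simp
    from filterlim_compose[OF this exp_at_top]
    have "((\<lambda>t. L (exp v * exp t) / L (exp t)) \<longlongrightarrow> 1) at_top" by simp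
    then have "((\<lambda>t. ln (L (exp v * exp t) / L (exp t))) \<longlongrightarrow> ln 1) at_top"
      by (intro tendsto_ln) auto
    moreover have "ln (L (exp v * exp t) / L (exp t)) = H (t + v) - H t" for t
      unfolding H_def using L_pos[of "exp t"] L_pos[of "exp v * exp t"]
      by (simp add: ln_div exp_add mult.commute)
    ultimately show ?thesis by simp
  qed
  have "ln C + 1 > 0" using ln_ge_zero[OF \<open>C \<ge> 1\<close>] by linarith
  then obtain T where T: "\<And>t u. t \<ge> T \<Longrightarrow> u \<in> {0..ln C + 1} \<Longrightarrow> \<bar>H (t + u) - H t\<bar> \<le> 1"
    using uniform_convergence_increments[of H, OF _ incr, of "ln C + 1" 1] unfolding H_def by force
  show ?thesis
  proof (intro exI[of _ "max 1 (exp T)"] conjI allI impI ballI)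
    fix x c assume x: "max 1 (exp T) \<le> x" and c: "c \<in> {1..C}"
    have "0 \<le> ln c" "ln c \<le> ln C" using c by simp_all
    then have "ln c \<in> {0..ln C + 1}" by (simp del: ln_le_cancel_iff)
    moreover have "T \<le> ln x" using x by (simp add: ln_ge_iff)
    ultimately have "\<bar>H (ln x + ln c) - H (ln x)\<bar> \<le> 1" by (intro T)
    moreover have "H (ln x + ln c) = ln (L (c * x))" "H (ln x) = ln (L x)"
      unfolding H_def using x c by (auto simp: exp_add mult.commute)
    ultimately have "\<bar>ln (L (c * x)) - ln (L x)\<bar> \<le> 1" by simp
    moreover have pos: "L (c * x) > 0" "L x > 0" using x c by (auto intro!: L_pos)
    moreover have "ln (exp 1 * L x) = 1 + ln (L x)" "ln (exp 1 * L (c * x)) = 1 + ln (L (c * x))"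
      using pos by (simp_all add: ln_mult)
    ultimately have "ln (L (c * x)) \<le> ln (exp 1 * L x)" "ln (L x) \<le> ln (exp 1 * L (c * x))"
      by arith+
    then show "L (c * x) \<le> exp 1 * L x" "L x \<le> exp 1 * L (c * x)"
      using pos by simp_all
  qed simp
qed

section \<open>The truncated mean\<close>

locale cauchy_offspring =
  fixes \<mu> :: "nat pmf" and L :: "real \<Rightarrow> real"
  assumes mean_sums_1: "(\<lambda>k. real k * pmf \<mu> k) sums 1"
    and slowly_varying_L: "slowly_varying L"
    and pmf_eq_L: "\<And>n. n \<ge> 1 \<Longrightarrow> pmf \<mu> n = L (real n) / (real n)\<^sup>2"
begin

lemma L_pos: "x > 0 \<Longrightarrow> L x > 0"
  using slowly_varying_L unfolding slowly_varying_def by auto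

lemma pmf_pos: "k \<ge> 1 \<Longrightarrow> pmf \<mu> k > 0"
  using pmf_eq_L[of k] L_pos[of "real k"] by simp

lemma mul_pmf_eq_L: "k \<ge> 1 \<Longrightarrow> real k * pmf \<mu> k = L (real k) / real k"
  using pmf_eq_L[of k] by (simp add: power2_eq_square)

abbreviation ell :: "real \<Rightarrow> real" where
  "ell \<equiv> trunc_mean \<mu>"

lemma summable_trunc_mean_terms: "summable (\<lambda>k. if x \<le> real k then real k * pmf \<mu> k else 0)"
  by (rule summable_comparison_test'[OF sums_summable[OF mean_sums_1]]) auto

lemma trunc_mean_sums: "(\<lambda>k. if x \<le> real k then real k * pmf \<mu> k else 0) sums ell x"
proof -
  have "(\<lambda>k. pmf \<mu> k * (real k * (if real k \<ge> x then 1 else 0))) sums ell x"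
    unfolding trunc_mean_def
    by (rule pmf_nat_expectation_sums, rule summable_comparison_test'[OF sums_summable[OF mean_sums_1]])
      auto
  moreover have "(\<lambda>k. pmf \<mu> k * (real k * (if real k \<ge> x then 1 else 0)))
      = (\<lambda>k. if x \<le> real k then real k * pmf \<mu> k else 0)" by auto
  ultimately show ?thesis by simp
qed

lemma ell_antimono: "x \<le> y \<Longrightarrow> ell y \<le> ell x"
  by (rule sums_le[OF _ trunc_mean_sums trunc_mean_sums]) auto

lemma ell_pos: "ell x > 0"
proof -
  define k0 where "k0 = nat \<lceil>max x 1\<rceil>"
  have k0: "x \<le> real k0" "k0 \<ge> 1" unfolding k0_def by linarith+
  have "0 < (\<Sum>k. if x \<le> real k then real k * pmf \<mu> k else 0)"
    by (rule suminf_pos2[OF summable_trunc_mean_terms, where i=k0]) (use k0 pmf_pos[of k0] in auto)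
  then show ?thesis using sums_unique[OF trunc_mean_sums] by simp
qed

lemma ell_le_1: "ell x \<le> 1"
  by (rule sums_le[OF _ trunc_mean_sums mean_sums_1]) auto

lemma ell_diff_eq_sum:
  assumes "x \<le> y"
  shows "ell x - ell y = (\<Sum>k | x \<le> real k \<and> real k < y. real k * pmf \<mu> k)"
proof -
  have fin: "finite {k :: nat. x \<le> real k \<and> real k < y}"
    by (rule finite_subset[OF _ finite_nat_less_real[of y]]) auto
  have "(\<lambda>k. (if x \<le> real k then real k * pmf \<mu> k else 0) - (if y \<le> real k then real k * pmf \<mu> k else 0))
      = (\<lambda>k. if k \<in> {k. x \<le> real k \<and> real k < y} then real k * pmf \<mu> k else 0)"
    using assms by (intro ext) (auto simp del: of_nat_le_iff)
  then have "(\<lambda>k. if k \<in> {k. x \<le> real k \<and> real k < y} then real k * pmf \<mu> k else 0) sums (ell x - ell y)"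
    using sums_diff[OF trunc_mean_sums[of x] trunc_mean_sums[of y]] by simp
  then show ?thesis using sums_If_finite_set[OF fin] by (rule sums_unique2)
qed

lemma ell_tendsto_0: "(ell \<longlongrightarrow> 0) at_top"
proof (rule tendstoI)
  fix r :: real assume "r > 0"
  obtain N where N: "dist (\<Sum>k<N. real k * pmf \<mu> k) 1 < r"
    using tendstoD[OF mean_sums_1[unfolded sums_def] \<open>r > 0\<close>]
    unfolding eventually_sequentially by blast
  have "ell x < r" if "x \<ge> real N" for x
  proof -
    have "(\<lambda>k. if k \<in> {..<N} then real k * pmf \<mu> k else 0) sums (\<Sum>k<N. real k * pmf \<mu> k)"
      by (rule sums_If_finite_set) simp
    then have "ell x + (\<Sum>k<N. real k * pmf \<mu> k) \<le> 1"
      using that by (intro sums_le[OF _ sums_add[OF trunc_mean_sums] mean_sums_1]) auto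
    then show ?thesis using N by (auto simp: dist_real_def)
  qed
  then show "eventually (\<lambda>x. dist (ell x) 0 < r) at_top"
    unfolding eventually_at_top_linorder using ell_pos by (metis abs_of_pos diff_zero dist_real_def)
qed

lemma ell_measurable [measurable]: "ell \<in> borel_measurable borel"
proof -
  have "mono (\<lambda>x. - ell x)" by (auto simp: mono_def intro: ell_antimono)
  then have "(\<lambda>x. - ell x) \<in> borel_measurable borel" by (rule borel_measurable_mono)
  then have "(\<lambda>x. - (- ell x)) \<in> borel_measurable borel" by measurable
  then show ?thesis by simp
qed

lemma tail_pos: "measure_pmf.prob \<mu> {k. x \<le> real k} > 0"
proof -
  define k0 where "k0 = nat \<lceil>max x 1\<rceil>"
  have k0: "x \<le> real k0" "k0 \<ge> 1" unfolding k0_def by linarith+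
  have "pmf \<mu> k0 \<le> measure_pmf.prob \<mu> {k. x \<le> real k}"
    unfolding measure_pmf_single[symmetric] using k0 by (intro measure_pmf.finite_measure_mono) auto
  then show ?thesis using pmf_pos[OF k0(2)] by simp
qed

lemma mul_tail_le_ell:
  assumes "0 \<le> x"
  shows "x * measure_pmf.prob \<mu> {k. x \<le> real k} \<le> ell x"
proof (rule sums_le[OF _ sums_mult[OF pmf_nat_prob_sums] trunc_mean_sums])
  show "x * (if k \<in> {k. x \<le> real k} then pmf \<mu> k else 0) \<le> (if x \<le> real k then real k * pmf \<mu> k else 0)"
    for k using assms by (auto intro: mult_right_mono)
qed

lemma mul_pmf_doubling_block_bounds:
  "\<exists>X\<ge>2. \<forall>y\<ge>X. \<forall>k. y \<le> real k \<and> real k < 2 * y \<longrightarrow>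
    L y / exp 1 / (2 * y) \<le> real k * pmf \<mu> k \<and> real k * pmf \<mu> k \<le> exp 1 * L y / y"
proof -
  obtain X where X: "\<And>x c. x \<ge> X \<Longrightarrow> c \<in> {1..2} \<Longrightarrow> L (c * x) \<le> exp 1 * L x \<and> L x \<le> exp 1 * L (c * x)"
    using slowly_varying_ratio_bounded[OF slowly_varying_L, of 2] by fastforce
  show ?thesis
  proof (intro exI[of _ "max X 2"] conjI allI impI)
    fix y :: real and k :: nat assume y: "max X 2 \<le> y" and k: "y \<le> real k \<and> real k < 2 * y"
    have "L y > 0" "k \<ge> 1" using L_pos y k by auto
    have "real k / y \<in> {1..2}" "real k / y * y = real k" using k y by (auto simp: field_simps)
    then have "L (real k) \<le> exp 1 * L y \<and> L y \<le> exp 1 * L (real k)"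
      using X[of y "real k / y"] y by auto
    then have Lk: "L (real k) \<le> exp 1 * L y" "L y / exp 1 \<le> L (real k)"
      by (auto simp: divide_le_eq mult.commute)
    have "L y / exp 1 / (2 * y) \<le> L y / exp 1 / real k"
      using k y \<open>L y > 0\<close> by (intro divide_left_mono) auto
    also have "\<dots> \<le> L (real k) / real k"
      using Lk k y by (intro divide_right_mono) auto
    finally have "L y / exp 1 / (2 * y) \<le> L (real k) / real k" .
    moreover have "L (real k) / real k \<le> exp 1 * L y / real k"
      using Lk k y by (intro divide_right_mono) auto
    moreover have "\<dots> \<le> exp 1 * L y / y"
      using k \<open>L y > 0\<close> y by (intro divide_left_mono) auto
    ultimately show "L y / exp 1 / (2 * y) \<le> real k * pmf \<mu> k" "real k * pmf \<mu> k \<le> exp 1 * L y / y"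
      using mul_pmf_eq_L[OF \<open>k \<ge> 1\<close>] by simp_all
  qed simp
qed

lemma ell_doubling_diff_bounds:
  "\<exists>X\<ge>2. \<forall>y\<ge>X. L y / (4 * exp 1) \<le> ell y - ell (2 * y) \<and> ell y - ell (2 * y) \<le> 2 * exp 1 * L y"
proof -
  obtain X where "X \<ge> 2" and X: "\<And>y k. y \<ge> X \<Longrightarrow> y \<le> real k \<and> real k < 2 * y \<Longrightarrow>
      L y / exp 1 / (2 * y) \<le> real k * pmf \<mu> k \<and> real k * pmf \<mu> k \<le> exp 1 * L y / y"
    using mul_pmf_doubling_block_bounds by blast
  show ?thesis
  proof (intro exI[of _ X] conjI allI impI)
    fix y assume y: "X \<le> y"
    define B where "B = {k :: nat. y \<le> real k \<and> real k < 2 * y}"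
    have diff: "ell y - ell (2 * y) = (\<Sum>k\<in>B. real k * pmf \<mu> k)"
      unfolding B_def using y \<open>X \<ge> 2\<close> by (intro ell_diff_eq_sum) auto
    have card: "y - 1 \<le> real (card B)" "real (card B) \<le> y + 1"
      using card_nat_doubling_interval[of y] y \<open>X \<ge> 2\<close> unfolding B_def by auto
    have "y \<ge> 2" "L y > 0" using L_pos y \<open>X \<ge> 2\<close> by auto
    have "ell y - ell (2 * y) \<le> real (card B) * (exp 1 * L y / y)"
      unfolding diff using X[OF y] by (intro sum_bounded_above) (auto simp: B_def)
    also have "\<dots> \<le> (y + 1) * (exp 1 * L y / y)"
      using card \<open>L y > 0\<close> \<open>y \<ge> 2\<close> by (intro mult_right_mono) auto
    also have "\<dots> \<le> 2 * exp 1 * L y"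
      using \<open>y \<ge> 2\<close> \<open>L y > 0\<close> by (simp add: field_simps)
    finally show "ell y - ell (2 * y) \<le> 2 * exp 1 * L y" .
    have "L y / (4 * exp 1) \<le> (y - 1) * (L y / exp 1 / (2 * y))"
      using \<open>y \<ge> 2\<close> \<open>L y > 0\<close> by (simp add: field_simps)
    also have "\<dots> \<le> real (card B) * (L y / exp 1 / (2 * y))"
      using card \<open>L y > 0\<close> \<open>y \<ge> 2\<close> by (intro mult_right_mono) auto
    also have "\<dots> \<le> ell y - ell (2 * y)"
      unfolding diff using X[OF y] by (intro sum_bounded_below) (auto simp: B_def)
    finally show "L y / (4 * exp 1) \<le> ell y - ell (2 * y)" .
  qed (use \<open>X \<ge> 2\<close> in simp)
qed

lemma ell_diff_dyadic_bounds:
  "\<exists>X\<ge>2. \<forall>x\<ge>X. real j * L x / (4 * exp 1 * exp 1) \<le> ell x - ell (2 ^ j * x) \<and>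
    ell x - ell (2 ^ j * x) \<le> 2 * exp 1 * exp 1 * real j * L x"
proof -
  obtain X where X: "\<And>x c. x \<ge> X \<Longrightarrow> c \<in> {1..2 ^ j} \<Longrightarrow> L (c * x) \<le> exp 1 * L x \<and> L x \<le> exp 1 * L (c * x)"
    using slowly_varying_ratio_bounded[OF slowly_varying_L, of "2 ^ j"] by fastforce
  obtain X1 where "X1 \<ge> 2" and X1: "\<And>y. y \<ge> X1 \<Longrightarrow>
      L y / (4 * exp 1) \<le> ell y - ell (2 * y) \<and> ell y - ell (2 * y) \<le> 2 * exp 1 * L y"
    using ell_doubling_diff_bounds by auto
  show ?thesis
  proof (intro exI[of _ "max X X1"] conjI allI impI)
    fix x assume x: "max X X1 \<le> x"
    have block: "L x / (4 * exp 1 * exp 1) \<le> ell (2 ^ i * x) - ell (2 ^ Suc i * x) \<and>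
      ell (2 ^ i * x) - ell (2 ^ Suc i * x) \<le> 2 * exp 1 * exp 1 * L x" if "i < j" for i
    proof -
      have "(2 :: real) ^ i \<in> {1..2 ^ j}" using \<open>i < j\<close> by (auto intro: power_increasing)
      then have L_le: "L x \<le> exp 1 * L (2 ^ i * x)" "L (2 ^ i * x) \<le> exp 1 * L x"
        using X[of x "2 ^ i"] x by auto
      have "X1 \<le> 2 ^ i * x"
        using x \<open>X1 \<ge> 2\<close> order_trans[OF _ mult_right_mono[of 1 "2 ^ i" x]] by simp
      then have "L (2 ^ i * x) / (4 * exp 1) \<le> ell (2 ^ i * x) - ell (2 ^ Suc i * x)"
        "ell (2 ^ i * x) - ell (2 ^ Suc i * x) \<le> 2 * exp 1 * L (2 ^ i * x)"
        using X1[of "2 ^ i * x"] by (simp_all add: mult.assoc)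
      moreover have "L x / (4 * exp 1 * exp 1) \<le> L (2 ^ i * x) / (4 * exp 1)"
        using L_le(1) by (simp add: field_simps)
      moreover have "2 * exp 1 * L (2 ^ i * x) \<le> 2 * exp 1 * exp 1 * L x"
        using mult_left_mono[OF L_le(2), of "2 * exp 1"] by (simp only: mult.assoc) simp
      ultimately show ?thesis by linarith
    qed
    have telescope: "ell x - ell (2 ^ j * x) = (\<Sum>i<j. ell (2 ^ i * x) - ell (2 ^ Suc i * x))"
      using sum_lessThan_telescope'[of "\<lambda>i. ell (2 ^ i * x)" j] by simp
    show "real j * L x / (4 * exp 1 * exp 1) \<le> ell x - ell (2 ^ j * x)"
      unfolding telescope using sum_bounded_below[of "{..<j}" "L x / (4 * exp 1 * exp 1)"] block by simp
    show "ell x - ell (2 ^ j * x) \<le> 2 * exp 1 * exp 1 * real j * L x"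
      unfolding telescope using sum_bounded_above[of "{..<j}" _ "2 * exp 1 * exp 1 * L x"] block
      by (simp add: mult_ac)
  qed (use \<open>X1 \<ge> 2\<close> in simp)
qed

text \<open>The first \<open>M\<close> dyadic blocks above \<open>x\<close> carry mass at least \<open>const * M * L x\<close> but at most \<open>ell x\<close>.\<close>
lemma L_over_ell_tendsto_0: "((\<lambda>x. L x / ell x) \<longlongrightarrow> 0) at_top"
proof (rule tendstoI)
  fix \<epsilon> :: real assume "\<epsilon> > 0"
  obtain M :: nat where M: "4 * exp 1 * exp 1 / \<epsilon> < real M"
    using reals_Archimedean2 by blast
  moreover have "0 < 4 * exp 1 * exp 1 / \<epsilon>" using \<open>\<epsilon> > 0\<close> by simp
  ultimately have "real M > 0" by linarith
  obtain X where "X \<ge> 2"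
    and X: "\<And>x. x \<ge> X \<Longrightarrow> real M * L x / (4 * exp 1 * exp 1) \<le> ell x - ell (2 ^ M * x)"
    using ell_diff_dyadic_bounds[of M] by blast
  have "dist (L x / ell x) 0 < \<epsilon>" if "x \<ge> X" for x
  proof -
    have "real M * L x / (4 * exp 1 * exp 1) < ell x"
      using X[OF that] ell_pos[of "2 ^ M * x"] by simp
    then have "L x / ell x < 4 * exp 1 * exp 1 / real M"
      using \<open>real M > 0\<close> ell_pos[of x] by (simp add: field_simps)
    also have "\<dots> < \<epsilon>" using M \<open>\<epsilon> > 0\<close> \<open>real M > 0\<close> by (simp add: field_simps)
    finally show ?thesis using L_pos[of x] ell_pos[of x] that \<open>X \<ge> 2\<close> by simp
  qed
  then show "eventually (\<lambda>x. dist (L x / ell x) 0 < \<epsilon>) at_top"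
    unfolding eventually_at_top_linorder by blast
qed

text \<open>The truncated mean is slowly varying: the \<open>j\<close> dyadic blocks between \<open>x\<close> and \<open>2\<^sup>j x\<close> carry
  mass \<open>O(j L x) = o(ell x)\<close>.\<close>
lemma eventually_ell_dilation_ge:
  assumes "K \<ge> 1" "\<delta> > 0"
  shows "eventually (\<lambda>x. (1 - \<delta>) * ell x \<le> ell (K * x)) at_top"
proof -
  obtain j :: nat where j: "K \<le> 2 ^ j"
    using real_arch_pow[of 2 K] by (auto intro: less_imp_le)
  obtain X where "X \<ge> 2" and X: "\<And>x. x \<ge> X \<Longrightarrow> ell x - ell (2 ^ j * x) \<le> 2 * exp 1 * exp 1 * real j * L x"
    using ell_diff_dyadic_bounds[of j] by blast
  define c where "c = 2 * exp 1 * exp 1 * (real j + 1)"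
  have "c > 0" unfolding c_def by simp
  have "eventually (\<lambda>x. L x / ell x < \<delta> / c) at_top"
    using L_over_ell_tendsto_0 \<open>\<delta> > 0\<close> \<open>c > 0\<close> by (intro order_tendstoD(2)) auto
  with eventually_ge_at_top[of X] show ?thesis
  proof eventually_elim
    case (elim x)
    have "K * x \<le> 2 ^ j * x" using j elim \<open>X \<ge> 2\<close> by (intro mult_right_mono) auto
    then have "ell x - ell (K * x) \<le> ell x - ell (2 ^ j * x)" using ell_antimono by simp
    also have "\<dots> \<le> 2 * exp 1 * exp 1 * real j * L x" using X elim by simp
    also have "\<dots> \<le> c * L x"
      unfolding c_def using L_pos[of x] elim \<open>X \<ge> 2\<close> by (intro mult_right_mono) auto
    also have "\<dots> \<le> \<delta> * ell x"
      using elim(2) \<open>c > 0\<close> ell_pos[of x] by (simp add: field_simps)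
    finally show ?case by (simp add: algebra_simps)
  qed
qed

definition trunc_second_moment :: "real \<Rightarrow> real" where
  "trunc_second_moment x = (\<Sum>k | real k < x. (real k)\<^sup>2 * pmf \<mu> k)"

lemma trunc_second_moment_nonneg: "0 \<le> trunc_second_moment x"
  unfolding trunc_second_moment_def by (intro sum_nonneg) simp

lemma trunc_second_moment_mono: "x \<le> y \<Longrightarrow> trunc_second_moment x \<le> trunc_second_moment y"
  unfolding trunc_second_moment_def by (intro sum_mono2 finite_nat_less_real) auto

lemma trunc_second_moment_double:
  assumes "y \<ge> 1"
  shows "trunc_second_moment (2 * y) \<le> trunc_second_moment y + 2 * y * (ell y - ell (2 * y))"
proof -
  define B where "B = {k :: nat. y \<le> real k \<and> real k < 2 * y}"
  have split: "{k :: nat. real k < 2 * y} = {k. real k < y} \<union> B" using assms by (auto simp: B_def)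
  have "finite B" unfolding B_def by (rule finite_subset[OF _ finite_nat_less_real]) auto
  then have "trunc_second_moment (2 * y) = trunc_second_moment y + (\<Sum>k\<in>B. (real k)\<^sup>2 * pmf \<mu> k)"
    unfolding trunc_second_moment_def split
    by (intro sum.union_disjoint) (auto simp: finite_nat_less_real B_def)
  also have "(\<Sum>k\<in>B. (real k)\<^sup>2 * pmf \<mu> k) \<le> (\<Sum>k\<in>B. 2 * y * (real k * pmf \<mu> k))"
  proof (rule sum_mono)
    fix k assume "k \<in> B"
    then have "real k * (real k * pmf \<mu> k) \<le> 2 * y * (real k * pmf \<mu> k)"
      by (intro mult_right_mono) (auto simp: B_def)
    then show "(real k)\<^sup>2 * pmf \<mu> k \<le> 2 * y * (real k * pmf \<mu> k)"
      by (simp add: power2_eq_square mult.assoc)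
  qed
  also have "\<dots> = 2 * y * (ell y - ell (2 * y))"
    using ell_diff_eq_sum[of y "2 * y"] assms by (simp add: sum_distrib_left B_def)
  finally show ?thesis by simp
qed

lemma trunc_second_moment_ratio_double_le:
  assumes "y \<ge> 1" "0 \<le> \<delta>" "\<delta> \<le> 1 / 10" and dilate: "(1 - \<delta>) * ell y \<le> ell (2 * y)"
  shows "trunc_second_moment (2 * y) / (2 * y * ell (2 * y))
    \<le> 3 / 5 * (trunc_second_moment y / (y * ell y)) + 2 * \<delta>"
proof -
  have pos: "ell y > 0" "ell (2 * y) > 0" by (rule ell_pos)+
  have diff: "ell y - ell (2 * y) \<le> \<delta> * ell y" using dilate by (simp add: algebra_simps)
  moreover have "\<delta> * ell y \<le> 1 / 10 * ell y" using assms pos by (intro mult_right_mono) auto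
  ultimately have "ell y \<le> 6 / 5 * ell (2 * y)" using pos by linarith
  then have ratio: "ell y / (2 * ell (2 * y)) \<le> 3 / 5" using pos by (simp add: field_simps)
  have "\<delta> * ell y \<le> \<delta> * (2 * ell (2 * y))"
    using \<open>ell y \<le> 6 / 5 * ell (2 * y)\<close> assms pos by (intro mult_left_mono) auto
  then have small: "(ell y - ell (2 * y)) / ell (2 * y) \<le> 2 * \<delta>"
    using diff pos by (simp add: divide_le_eq)
  have "trunc_second_moment (2 * y) / (2 * y * ell (2 * y))
      \<le> (trunc_second_moment y + 2 * y * (ell y - ell (2 * y))) / (2 * y * ell (2 * y))"
    using trunc_second_moment_double[OF \<open>y \<ge> 1\<close>] \<open>y \<ge> 1\<close> pos by (intro divide_right_mono) auto
  also have "\<dots> = trunc_second_moment y / (y * ell y) * (ell y / (2 * ell (2 * y)))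
      + (ell y - ell (2 * y)) / ell (2 * y)"
    using \<open>y \<ge> 1\<close> pos by (simp add: field_simps)
  also have "\<dots> \<le> trunc_second_moment y / (y * ell y) * (3 / 5) + 2 * \<delta>"
    using ratio small trunc_second_moment_nonneg[of y] pos \<open>y \<ge> 1\<close>
    by (intro add_mono mult_left_mono) auto
  finally show ?thesis by simp
qed

text \<open>Along dyadic points the normalised second moment contracts by a factor close to \<open>1/2\<close>.\<close>
lemma trunc_second_moment_dyadic_tendsto_0:
  "(\<lambda>j. trunc_second_moment (2 ^ j) / (2 ^ j * ell (2 ^ j))) \<longlonglongrightarrow> 0"
proof (rule tendsto_0_if_contracting[of _ "3 / 5"])
  show "0 \<le> trunc_second_moment (2 ^ j) / (2 ^ j * ell (2 ^ j))" for j
    using trunc_second_moment_nonneg ell_pos by (intro divide_nonneg_pos) auto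
  fix \<epsilon> :: real assume "\<epsilon> > 0"
  define \<delta> where "\<delta> = min (1 / 10) (\<epsilon> / 2)"
  have \<delta>: "\<delta> > 0" "\<delta> \<le> 1 / 10" "2 * \<delta> \<le> \<epsilon>" using \<open>\<epsilon> > 0\<close> unfolding \<delta>_def by auto
  have "eventually (\<lambda>x. (1 - \<delta>) * ell x \<le> ell (2 * x)) at_top"
    using \<delta> by (intro eventually_ell_dilation_ge) auto
  from filterlim_iff[THEN iffD1, OF filterlim_two_power_at_top, rule_format, OF this]
  show "eventually (\<lambda>j. trunc_second_moment (2 ^ Suc j) / (2 ^ Suc j * ell (2 ^ Suc j))
      \<le> 3 / 5 * (trunc_second_moment (2 ^ j) / (2 ^ j * ell (2 ^ j))) + \<epsilon>) sequentially"
  proof eventually_elim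
    case (elim j)
    then show ?case
      using trunc_second_moment_ratio_double_le[of "2 ^ j" \<delta>] \<delta> by (simp add: mult.assoc)
  qed
qed auto

lemma trunc_second_moment_over_ell_tendsto_0:
  "((\<lambda>x. trunc_second_moment x / (x * ell x)) \<longlongrightarrow> 0) at_top"
proof (rule tendstoI)
  fix \<epsilon> :: real assume "\<epsilon> > 0"
  then obtain J where J: "\<And>j. j \<ge> J \<Longrightarrow> trunc_second_moment (2 ^ j) / (2 ^ j * ell (2 ^ j)) < \<epsilon> / 2"
    using order_tendstoD(2)[OF trunc_second_moment_dyadic_tendsto_0, of "\<epsilon> / 2"]
    unfolding eventually_sequentially by auto
  have "dist (trunc_second_moment x / (x * ell x)) 0 < \<epsilon>" if x: "x \<ge> 2 ^ J" for x
  proof -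
    have "x \<ge> 1" using x one_le_power[of "2 :: real" J] by linarith
    obtain j where j: "2 ^ j \<le> x" "x < 2 ^ Suc j"
      using ex_power_two_bracket[OF \<open>x \<ge> 1\<close>] by blast
    have "Suc j \<ge> J"
    proof (rule ccontr)
      assume "\<not> Suc j \<ge> J"
      then have "(2 :: real) ^ Suc j \<le> 2 ^ J" by (intro power_increasing) auto
      then show False using x j by linarith
    qed
    have "trunc_second_moment x / (x * ell x)
        \<le> trunc_second_moment (2 ^ Suc j) / (2 ^ j * ell (2 ^ Suc j))"
      using j ell_pos trunc_second_moment_nonneg
      by (intro frac_le trunc_second_moment_mono mult_mono ell_antimono) (auto intro: less_imp_le)
    also have "\<dots> = 2 * (trunc_second_moment (2 ^ Suc j) / (2 ^ Suc j * ell (2 ^ Suc j)))"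
      by simp
    also have "\<dots> < \<epsilon>" using J[OF \<open>Suc j \<ge> J\<close>] by simp
    finally show ?thesis
      using \<open>x \<ge> 1\<close> ell_pos[of x] trunc_second_moment_nonneg[of x] by simp
  qed
  then show "eventually (\<lambda>x. dist (trunc_second_moment x / (x * ell x)) 0 < \<epsilon>) at_top"
    unfolding eventually_at_top_linorder by blast
qed

section \<open>The decrement of the survival probability\<close>

abbreviation Q :: "nat \<Rightarrow> real" where
  "Q \<equiv> survival \<mu>"

definition D :: "real \<Rightarrow> real" where
  "D u = pgf \<mu> (1 - u) - (1 - u)"

lemma survival_Suc_eq: "Q (Suc m) = Q m - D (Q m)"
  by (simp add: survival_Suc D_def)

lemma D_sums:
  assumes "0 \<le> u" "u \<le> 1"
  shows "(\<lambda>k. pmf \<mu> k * ((1 - u) ^ k - 1 + real k * u)) sums D u"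
proof -
  have "(\<lambda>k. pmf \<mu> k * (1 - u) ^ k - pmf \<mu> k + u * (real k * pmf \<mu> k)) sums (pgf \<mu> (1 - u) - 1 + u * 1)"
    using assms by (intro sums_add sums_diff pgf_sums pmf_nat_sums_1 sums_mult mean_sums_1) auto
  then show ?thesis unfolding D_def by (simp add: algebra_simps)
qed

lemma D_terms_nonneg: "u \<le> 1 \<Longrightarrow> 0 \<le> pmf \<mu> k * ((1 - u) ^ k - 1 + real k * u)"
  using Bernoulli_inequality[of "- u" k] by (intro mult_nonneg_nonneg) simp_all

lemma D_nonneg:
  assumes "0 \<le> u" "u \<le> 1"
  shows "0 \<le> D u"
  by (rule sums_le[OF _ sums_zero D_sums[OF assms]]) (simp add: D_terms_nonneg assms)

lemma D_less:
  assumes "0 < u" "u \<le> 1"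
  shows "D u < u"
proof -
  have "(\<lambda>k. u * (real k * pmf \<mu> k) - pmf \<mu> k * ((1 - u) ^ k - 1 + real k * u)) sums (u * 1 - D u)"
    using assms by (intro sums_diff sums_mult mean_sums_1 D_sums) auto
  then have S: "(\<lambda>k. pmf \<mu> k * (1 - (1 - u) ^ k)) sums (u - D u)"
    by (simp add: algebra_simps)
  have "0 < u - D u" unfolding sums_unique[OF S]
  proof (rule suminf_pos2[OF sums_summable[OF S], where i=1])
    show "0 \<le> pmf \<mu> k * (1 - (1 - u) ^ k)" for k
      using assms by (simp add: power_le_one)
    show "0 < pmf \<mu> 1 * (1 - (1 - u) ^ 1)"
      using pmf_pos[of 1] assms by simp
  qed
  then show ?thesis by simp
qed

lemma D_ge_quadratic:
  assumes "0 \<le> u" "u \<le> 1"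
  shows "pmf \<mu> 2 * u\<^sup>2 \<le> D u"
proof -
  have "(\<Sum>k\<in>{2}. pmf \<mu> k * ((1 - u) ^ k - 1 + real k * u)) \<le> D u"
    unfolding sums_unique[OF D_sums[OF assms]]
    by (rule sum_le_suminf[OF sums_summable[OF D_sums[OF assms]]]) (auto simp: D_terms_nonneg assms)
  then show ?thesis by (simp add: power2_eq_square algebra_simps)
qed

lemma survival_pos: "0 < Q m"
proof (induction m)
  case (Suc m)
  then show ?case using D_less[of "Q m"] survival_bounds[of \<mu> m] by (simp add: survival_Suc_eq)
qed simp

lemma decseq_survival: "decseq Q"
  using D_nonneg survival_bounds by (intro decseq_SucI) (simp add: survival_Suc_eq)

lemma survival_tendsto_0: "Q \<longlonglongrightarrow> 0"
proof -
  have "\<forall>m. 0 \<le> Q m" using survival_bounds[of \<mu>] by simp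
  then obtain q where q: "Q \<longlonglongrightarrow> q"
    using decseq_convergent[OF decseq_survival] by blast
  have "0 \<le> q" using q \<open>\<forall>m. 0 \<le> Q m\<close> by (simp add: LIMSEQ_le_const)
  have "(\<lambda>m. Q (Suc m)) \<longlonglongrightarrow> q" using q by (rule LIMSEQ_Suc)
  moreover have "(\<lambda>m. Q m - pmf \<mu> 2 * (Q m)\<^sup>2) \<longlonglongrightarrow> q - pmf \<mu> 2 * q\<^sup>2"
    by (intro tendsto_intros q)
  moreover have "Q (Suc m) \<le> Q m - pmf \<mu> 2 * (Q m)\<^sup>2" for m
    using D_ge_quadratic[of "Q m"] survival_bounds[of \<mu> m] by (simp add: survival_Suc_eq)
  ultimately have "q \<le> q - pmf \<mu> 2 * q\<^sup>2" by (intro LIMSEQ_le) auto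
  then have "q = 0" using pmf_pos[of 2] \<open>0 \<le> q\<close> by (simp add: mult_le_0_iff)
  then show ?thesis using q by simp
qed

lemma filterlim_survival_at_right_0: "filterlim Q (at_right 0) sequentially"
proof -
  have "Q m \<in> {0<..} \<and> Q m \<noteq> 0" for m using survival_pos[of m] by simp
  then show ?thesis unfolding filterlim_at using survival_tendsto_0 by (simp add: always_eventually)
qed

lemma D_le:
  assumes "0 < u" "u \<le> 1"
  shows "D u \<le> u\<^sup>2 * trunc_second_moment (1 / u) + u * ell (1 / u)"
proof -
  have "(\<lambda>k. if k \<in> {k. real k < 1 / u} then u\<^sup>2 * ((real k)\<^sup>2 * pmf \<mu> k) else 0)
      sums (u\<^sup>2 * trunc_second_moment (1 / u))"
    using sums_If_finite_set[OF finite_nat_less_real, where f="\<lambda>k. u\<^sup>2 * ((real k)\<^sup>2 * pmf \<mu> k)"]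
    unfolding trunc_second_moment_def by (simp add: sum_distrib_left)
  note S = sums_add[OF this sums_mult[OF trunc_mean_sums[of "1 / u"], of u]]
  show ?thesis
  proof (rule sums_le[OF _ D_sums S])
    fix k
    show "pmf \<mu> k * ((1 - u) ^ k - 1 + real k * u)
      \<le> (if k \<in> {k. real k < 1 / u} then u\<^sup>2 * ((real k)\<^sup>2 * pmf \<mu> k) else 0)
        + u * (if 1 / u \<le> real k then real k * pmf \<mu> k else 0)"
    proof (cases "real k < 1 / u")
      case True
      have "pmf \<mu> k * ((1 - u) ^ k - 1 + real k * u) \<le> pmf \<mu> k * ((real k)\<^sup>2 * u\<^sup>2)"
        using one_minus_power_le_quadratic[of u k] assms by (intro mult_left_mono) auto
      then show ?thesis using True by (simp add: algebra_simps)
    next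
      case False
      have "pmf \<mu> k * ((1 - u) ^ k - 1 + real k * u) \<le> pmf \<mu> k * (real k * u)"
        using assms by (intro mult_left_mono) (auto simp: power_le_one)
      then show ?thesis using False by (simp add: algebra_simps)
    qed
  qed (use assms in auto)
qed

lemma D_ge:
  assumes "0 < u" "u \<le> 1" "K \<ge> 1"
  shows "(1 - 1 / K) * u * ell (K / u) \<le> D u"
proof (rule sums_le[OF _ sums_mult[OF trunc_mean_sums] D_sums])
  fix k
  show "(1 - 1 / K) * u * (if K / u \<le> real k then real k * pmf \<mu> k else 0)
    \<le> pmf \<mu> k * ((1 - u) ^ k - 1 + real k * u)"
  proof (cases "K / u \<le> real k")
    case True
    then have "1 \<le> real k * u / K" using assms by (simp add: field_simps)
    then have "(1 - 1 / K) * (real k * u) \<le> real k * u - 1"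
      using assms by (simp add: field_simps)
    also have "\<dots> \<le> (1 - u) ^ k - 1 + real k * u" using assms by simp
    finally have "pmf \<mu> k * ((1 - 1 / K) * (real k * u)) \<le> pmf \<mu> k * ((1 - u) ^ k - 1 + real k * u)"
      by (intro mult_left_mono) auto
    then show ?thesis using True by (simp add: algebra_simps)
  next
    case False
    then show ?thesis using D_terms_nonneg[of u k] assms by simp
  qed
qed (use assms in auto)

text \<open>The jumps \<open>k \<ge> K/u\<close> contribute at least \<open>(1 - 1/K) k u\<close> each to \<open>D u\<close>.\<close>
lemma eventually_D_ge:
  assumes "\<delta> > 0"
  shows "eventually (\<lambda>u. (1 - \<delta>) * u * ell (1 / u) \<le> D u) (at_right 0)"
proof -
  define d where "d = min \<delta> 1"
  have d: "0 < d" "d \<le> \<delta>" "d \<le> 1" using assms unfolding d_def by auto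
  define K where "K = 2 / d"
  have K: "K \<ge> 1" "1 / K = d / 2" using d unfolding K_def by (auto simp: field_simps)
  have "(1 - d / 2) * (1 - d / 2) = 1 - d + d * d / 4" by (simp add: algebra_simps)
  moreover have "0 \<le> d * d / 4" using d by simp
  ultimately have "1 - \<delta> \<le> (1 - d / 2) * (1 - d / 2)" using d by linarith
  have "eventually (\<lambda>x. (1 - d / 2) * ell x \<le> ell (K * x)) at_top"
    using d K by (intro eventually_ell_dilation_ge) auto
  then have "eventually (\<lambda>x. (1 - \<delta>) * inverse x * ell (1 / inverse x) \<le> D (inverse x)) at_top"
    using eventually_ge_at_top[of 1]
  proof eventually_elim
    case (elim x)
    define u where "u = inverse x"
    have u: "0 < u" "u \<le> 1" "1 / u = x" using elim unfolding u_def by (auto simp: field_simps)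
    have "(1 - \<delta>) * (u * ell x) \<le> ((1 - d / 2) * (1 - d / 2)) * (u * ell x)"
      using \<open>1 - \<delta> \<le> (1 - d / 2) * (1 - d / 2)\<close> u ell_pos[of x] by (intro mult_right_mono) auto
    also have "\<dots> \<le> (1 - d / 2) * u * ell (K * x)"
      using elim(1) d u by (simp add: mult.assoc mult_left_mono)
    also have "\<dots> = (1 - 1 / K) * u * ell (K / u)"
    proof -
      have "1 - 1 / K = 1 - d / 2" "K / u = K * x" using K(2) u(3)[symmetric] by simp_all
      then show ?thesis by (simp only:)
    qed
    also have "\<dots> \<le> D u" using D_ge[OF u(1,2) K(1)] .
    finally show ?case using u unfolding u_def by (simp add: mult.assoc)
  qed
  then show ?thesis unfolding eventually_at_right_to_top .
qed

text \<open>The jumps \<open>k < 1/u\<close> contribute at most \<open>u\<^sup>2\<close> times the truncated second moment, which is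
  \<open>o(u ell(1/u))\<close>, and the others at most \<open>k u\<close> each.\<close>
lemma eventually_D_le:
  assumes "\<delta> > 0"
  shows "eventually (\<lambda>u. D u \<le> (1 + \<delta>) * u * ell (1 / u)) (at_right 0)"
proof -
  have "eventually (\<lambda>x. trunc_second_moment x / (x * ell x) < \<delta>) at_top"
    using trunc_second_moment_over_ell_tendsto_0 assms by (intro order_tendstoD(2)) auto
  then have "eventually (\<lambda>x. D (inverse x) \<le> (1 + \<delta>) * inverse x * ell (1 / inverse x)) at_top"
    using eventually_ge_at_top[of 1]
  proof eventually_elim
    case (elim x)
    define u where "u = inverse x"
    have u: "0 < u" "u \<le> 1" "1 / u = x" using elim unfolding u_def by (auto simp: field_simps)
    have "trunc_second_moment x < \<delta> * (x * ell x)"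
      using elim ell_pos[of x] by (simp add: field_simps)
    then have "u\<^sup>2 * trunc_second_moment x \<le> u\<^sup>2 * (\<delta> * (x * ell x))"
      using u by (intro mult_left_mono) auto
    also have "\<dots> = \<delta> * u * ell x" using u by (simp add: power2_eq_square field_simps)
    finally show ?case
      using D_le[OF u(1,2)] u unfolding u_def by (simp add: algebra_simps)
  qed
  then show ?thesis unfolding eventually_at_right_to_top .
qed

section \<open>The integral Phi along the survival probabilities\<close>

definition Phi :: "real \<Rightarrow> real" where
  "Phi y = (LBINT x=1..y. 1 / (x * ell x))"

lemma set_integrable_Phi_integrand:
  assumes "1 \<le> a" "A \<subseteq> {a..b}" "A \<in> sets lborel"
  shows "set_integrable lborel A (\<lambda>x. 1 / (x * ell x))"
  unfolding set_integrable_def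
proof (rule integrableI_bounded_set_indicator[where B="1 / (a * ell b)"])
  have "emeasure lborel A \<le> emeasure lborel {a..b}" using assms by (intro emeasure_mono) auto
  then show "emeasure lborel A < \<infinity>" by (auto simp: emeasure_lborel_Icc_eq less_top[symmetric] top_unique)
  show "AE x in lborel. x \<in> A \<longrightarrow> norm (1 / (x * ell x)) \<le> 1 / (a * ell b)"
  proof (intro always_eventually allI impI)
    fix x assume "x \<in> A"
    then have x: "a \<le> x" "x \<le> b" using assms by auto
    then have "a * ell b \<le> x * ell x"
      using assms ell_pos by (intro mult_mono ell_antimono) (auto intro: less_imp_le)
    then show "norm (1 / (x * ell x)) \<le> 1 / (a * ell b)"
      using x assms ell_pos[of b] ell_pos[of x] by (simp add: frac_le)
  qed
qed (use assms in auto)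

lemma Phi_add:
  assumes "1 \<le> y" "y \<le> z"
  shows "Phi z = Phi y + (LBINT x=y..z. 1 / (x * ell x))"
proof -
  have "interval_lebesgue_integrable lborel (ereal 1) (ereal z) (\<lambda>x. 1 / (x * ell x))"
    unfolding interval_lebesgue_integrable_def using assms
    by (auto intro!: set_integrable_Phi_integrand[where a=1 and b=z])
  then have "(LBINT x=ereal 1..ereal y. 1 / (x * ell x)) + (LBINT x=ereal y..ereal z. 1 / (x * ell x))
      = (LBINT x=ereal 1..ereal z. 1 / (x * ell x))"
    using assms by (intro interval_integral_sum) (simp add: min_def max_def)
  then show ?thesis unfolding Phi_def by (simp add: one_ereal_def)
qed

text \<open>Since \<open>ell\<close> is non-increasing, on \<open>[y, z]\<close> the integrand lies between \<open>1 / (x ell y)\<close> and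
  \<open>1 / (x ell z)\<close>.\<close>
lemma Phi_diff_bounds:
  assumes "1 \<le> y" "y \<le> z"
  shows "(ln z - ln y) / ell y \<le> Phi z - Phi y \<and> Phi z - Phi y \<le> (ln z - ln y) / ell z"
proof -
  have diff: "Phi z - Phi y = (LBINT x:{y..z}. 1 / (x * ell x))"
    using Phi_add[OF assms] interval_integral_Icc[OF assms(2)] by simp
  have int: "set_integrable lborel {y..z} (\<lambda>x. 1 / (x * ell x))"
    using assms by (intro set_integrable_Phi_integrand[where a=y and b=z]) auto
  have int_inv: "set_integrable lborel {y..z} (\<lambda>x. c * (1 / x))" for c
    using assms
    by (intro set_integrable_mult_right borel_integrable_atLeastAtMost' continuous_intros) auto
  have "(LBINT x:{y..z}. 1 / x) = ln z - ln y"
    using interval_integral_inverse[of y z] assms interval_integral_Icc[OF assms(2), of "\<lambda>x. 1 / x"]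
    by simp
  then have ln: "(LBINT x:{y..z}. c * (1 / x)) = c * (ln z - ln y)" for c
    by (simp only: set_integral_mult_right)
  have "(LBINT x:{y..z}. 1 / (x * ell x)) \<le> (LBINT x:{y..z}. 1 / ell z * (1 / x))"
  proof (rule set_integral_mono[OF int int_inv])
    fix x assume "x \<in> {y..z}"
    then have "x * ell z \<le> x * ell x" using assms by (intro mult_left_mono ell_antimono) auto
    then show "1 / (x * ell x) \<le> 1 / ell z * (1 / x)"
      using \<open>x \<in> {y..z}\<close> assms ell_pos[of z] by (simp add: frac_le)
  qed
  moreover have "(LBINT x:{y..z}. 1 / ell y * (1 / x)) \<le> (LBINT x:{y..z}. 1 / (x * ell x))"
  proof (rule set_integral_mono[OF int_inv int])
    fix x assume "x \<in> {y..z}"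
    then have "x * ell x \<le> x * ell y" using assms by (intro mult_left_mono ell_antimono) auto
    then show "1 / ell y * (1 / x) \<le> 1 / (x * ell x)"
      using \<open>x \<in> {y..z}\<close> assms ell_pos[of x] by (simp add: frac_le)
  qed
  ultimately show ?thesis unfolding diff ln by simp
qed

lemma Phi_1: "Phi 1 = 0"
  unfolding Phi_def by (simp add: one_ereal_def)

lemma Phi_mono:
  assumes "1 \<le> y" "y \<le> z"
  shows "Phi y \<le> Phi z"
proof -
  have "0 \<le> (ln z - ln y) / ell y" using assms ell_pos[of y] by simp
  then show ?thesis using Phi_diff_bounds[OF assms] by linarith
qed

lemma Phi_nonneg: "1 \<le> y \<Longrightarrow> 0 \<le> Phi y"
  using Phi_mono[of 1 y] Phi_1 by simp

text \<open>A step \<open>u \<mapsto> v = u - D u\<close> of the recursion moves \<open>Phi (1 / \<cdot>)\<close> by about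
  \<open>(ln u - ln v) / ell (1 / u) \<approx> D u / (u ell (1 / u)) \<approx> 1\<close>.\<close>
lemma Phi_step_ge:
  assumes u: "0 < u" "u \<le> 1" and v: "0 < v" "v = u - D u"
    and D_ge: "(1 - \<delta>) * u * ell (1 / u) \<le> D u"
  shows "1 - \<delta> \<le> Phi (1 / v) - Phi (1 / u)"
proof -
  have "v \<le> u" using v D_nonneg[of u] u by simp
  have "ln (v / u) \<le> v / u - 1" using u v by (intro ln_le_minus_one) auto
  then have "ln v - ln u \<le> v / u - 1" using u v(1) by (simp add: ln_div)
  moreover have "v / u - 1 = - (D u / u)" using u unfolding v(2) by (simp add: field_simps)
  moreover have "ln (1 / v) - ln (1 / u) = ln u - ln v" using u v(1) by (simp add: ln_div)
  ultimately have ln_ge: "D u / u \<le> ln (1 / v) - ln (1 / u)" by linarith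
  have "1 - \<delta> \<le> (D u / u) / ell (1 / u)"
    using D_ge u ell_pos[of "1 / u"] by (simp add: field_simps)
  also have "\<dots> \<le> (ln (1 / v) - ln (1 / u)) / ell (1 / u)"
    using ln_ge ell_pos[of "1 / u"] by (intro divide_right_mono) auto
  also have "\<dots> \<le> Phi (1 / v) - Phi (1 / u)"
    using Phi_diff_bounds[of "1 / u" "1 / v"] u v \<open>v \<le> u\<close> by (simp add: frac_le)
  finally show ?thesis .
qed

lemma Phi_step_le:
  assumes \<delta>: "0 \<le> \<delta>" "\<delta> \<le> 1 / 10"
    and u: "0 < u" "u \<le> 1" and v: "0 < v" "v = u - D u"
    and D_le: "D u \<le> (1 + \<delta>) * u * ell (1 / u)"
    and small: "ell (1 / u) \<le> \<delta>" and dilate: "(1 - \<delta>) * ell (1 / u) \<le> ell (2 / u)"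
  shows "Phi (1 / v) - Phi (1 / u) \<le> 1 + 6 * \<delta>"
proof -
  define l where "l = ell (1 / u)"
  have "l > 0" unfolding l_def by (rule ell_pos)
  have "v \<le> u" using v D_nonneg[of u] u by simp
  have "(1 + \<delta>) * u * ell (1 / u) \<le> (1 + \<delta>) * u * \<delta>"
    using small \<delta> u by (intro mult_left_mono) auto
  also have "\<dots> \<le> 2 * (u * \<delta>)"
    using \<delta> u by (simp add: mult.assoc mult_right_mono)
  finally have "D u \<le> 2 * \<delta> * u" using D_le by (simp add: mult_ac)
  then have v_ge: "(1 - 2 * \<delta>) * u \<le> v" using v by (simp add: algebra_simps)
  have "1 / 2 * u \<le> (1 - 2 * \<delta>) * u" using \<delta> u by (intro mult_right_mono) auto
  then have "u \<le> 2 * v" using v_ge by linarith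
  then have "1 / v \<le> 2 / u" using u v by (simp add: field_simps)
  then have ell_v: "(1 - \<delta>) * l \<le> ell (1 / v)"
    using dilate ell_antimono[of "1 / v" "2 / u"] unfolding l_def by linarith
  have "ln (u / v) \<le> u / v - 1" using u v by (intro ln_le_minus_one) auto
  then have "ln u - ln v \<le> u / v - 1" using u v(1) by (simp add: ln_div)
  moreover have "u / v - 1 = D u / v" using v by (simp add: field_simps)
  moreover have "ln (1 / v) - ln (1 / u) = ln u - ln v" using u v(1) by (simp add: ln_div)
  ultimately have ln_le: "ln (1 / v) - ln (1 / u) \<le> D u / v" by linarith
  have "Phi (1 / v) - Phi (1 / u) \<le> (ln (1 / v) - ln (1 / u)) / ell (1 / v)"
    using Phi_diff_bounds[of "1 / u" "1 / v"] u v \<open>v \<le> u\<close> by (simp add: frac_le)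
  also have "\<dots> \<le> (D u / v) / ell (1 / v)"
    using ln_le ell_pos[of "1 / v"] by (intro divide_right_mono) auto
  also have "\<dots> \<le> ((1 + \<delta>) * u * l / ((1 - 2 * \<delta>) * u)) / ((1 - \<delta>) * l)"
    using D_le v_ge ell_v \<delta> u v \<open>l > 0\<close> D_nonneg[of u] unfolding l_def[symmetric]
    by (intro frac_le divide_nonneg_pos mult_pos_pos) auto
  also have "\<dots> = ((1 + \<delta>) * (u * l)) / (((1 - 2 * \<delta>) * (1 - \<delta>)) * (u * l))"
    by (simp add: mult_ac)
  also have "\<dots> = (1 + \<delta>) / ((1 - 2 * \<delta>) * (1 - \<delta>))"
    using u \<open>l > 0\<close> by (intro nonzero_mult_divide_mult_cancel_right) auto
  also have "\<dots> \<le> 1 + 6 * \<delta>" using ratio_le_one_plus_six_mult \<delta> by blast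
  finally show ?thesis .
qed

lemma eventually_Phi_inv_survival_increment:
  assumes "\<eta> > 0"
  shows "eventually (\<lambda>m. 1 - \<eta> \<le> Phi (1 / Q (Suc m)) - Phi (1 / Q m) \<and>
    Phi (1 / Q (Suc m)) - Phi (1 / Q m) \<le> 1 + \<eta>) sequentially"
proof -
  define \<delta> where "\<delta> = min (1 / 10) (\<eta> / 6)"
  have \<delta>: "0 < \<delta>" "\<delta> \<le> 1 / 10" "\<delta> \<le> \<eta>" "6 * \<delta> \<le> \<eta>" using assms unfolding \<delta>_def by auto
  have "eventually (\<lambda>x. 1 \<le> x \<and> ell x \<le> \<delta> \<and> (1 - \<delta>) * ell x \<le> ell (2 * x)) at_top"
    using eventually_ge_at_top[of 1] order_tendstoD(2)[OF ell_tendsto_0 \<open>\<delta> > 0\<close>]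
      eventually_ell_dilation_ge[OF one_le_numeral \<open>\<delta> > 0\<close>]
    by eventually_elim auto
  then have "eventually (\<lambda>u. u \<le> 1 \<and> ell (1 / u) \<le> \<delta> \<and> (1 - \<delta>) * ell (1 / u) \<le> ell (2 / u)) (at_right 0)"
    unfolding eventually_at_right_to_top by eventually_elim (auto simp: divide_inverse inverse_le_1_iff)
  then have "eventually (\<lambda>u. u \<le> 1 \<and> ell (1 / u) \<le> \<delta> \<and> (1 - \<delta>) * ell (1 / u) \<le> ell (2 / u) \<and>
      (1 - \<delta>) * u * ell (1 / u) \<le> D u \<and> D u \<le> (1 + \<delta>) * u * ell (1 / u)) (at_right 0)"
    using eventually_D_ge[OF \<open>\<delta> > 0\<close>] eventually_D_le[OF \<open>\<delta> > 0\<close>] by eventually_elim auto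
  from filterlim_iff[THEN iffD1, OF filterlim_survival_at_right_0, rule_format, OF this]
  show ?thesis
  proof eventually_elim
    case (elim m)
    have v: "0 < Q (Suc m)" "Q (Suc m) = Q m - D (Q m)"
      by (rule survival_pos, rule survival_Suc_eq)
    have "1 - \<delta> \<le> Phi (1 / Q (Suc m)) - Phi (1 / Q m)"
      using elim by (intro Phi_step_ge[OF survival_pos _ v]) auto
    moreover have "Phi (1 / Q (Suc m)) - Phi (1 / Q m) \<le> 1 + 6 * \<delta>"
      using elim \<delta> by (intro Phi_step_le[OF _ _ survival_pos _ v]) auto
    ultimately show ?case using \<delta> by linarith
  qed
qed

lemma Phi_inv_survival_linear:
  assumes "\<eta> > 0"
  shows "\<exists>C\<ge>0. \<forall>m. (1 - \<eta>) * real m - C \<le> Phi (1 / Q m) \<and> Phi (1 / Q m) \<le> (1 + \<eta>) * real m + C"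
  by (rule linear_bounds_if_eventually_increments[OF eventually_Phi_inv_survival_increment[OF assms]])

text \<open>On \<open>[y / M, y]\<close> the integrand is at least \<open>1 / (x ell (y / M))\<close>, so \<open>Phi y \<ge> ln M / ell (y / M)\<close>,
  while \<open>ell (K y) \<ge> ell (y / M) / 2\<close> by slow variation.\<close>
lemma Phi_mul_ell_tendsto_infinity:
  assumes "K \<ge> 1"
  shows "filterlim (\<lambda>y. Phi y * ell (K * y)) at_top at_top"
  unfolding filterlim_at_top
proof
  fix B :: real
  define M where "M = exp (2 * max B 0)"
  have "M \<ge> 1" "ln M = 2 * max B 0" unfolding M_def by simp_all
  have "1 * 1 \<le> K * M" using assms \<open>M \<ge> 1\<close> by (intro mult_mono) auto
  then have dilate: "eventually (\<lambda>x. (1 - 1 / 2) * ell x \<le> ell ((K * M) * x)) at_top"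
    by (intro eventually_ell_dilation_ge) auto
  have "filterlim (\<lambda>y. (1 / M) * y) at_top at_top"
    using \<open>M \<ge> 1\<close>
    by (intro filterlim_tendsto_pos_mult_at_top[OF tendsto_const]) (auto simp: filterlim_ident)
  from filterlim_iff[THEN iffD1, OF this, rule_format, OF dilate]
  have "eventually (\<lambda>y. (1 - 1 / 2) * ell ((1 / M) * y) \<le> ell ((K * M) * ((1 / M) * y))) at_top" .
  then show "eventually (\<lambda>y. B \<le> Phi y * ell (K * y)) at_top"
    using eventually_ge_at_top[of M]
  proof eventually_elim
    case (elim y)
    define w where "w = (1 / M) * y"
    have w: "1 \<le> w" "w \<le> y" using elim(2) \<open>M \<ge> 1\<close> unfolding w_def by (auto simp: field_simps)
    have KMw: "(K * M) * w = K * y" unfolding w_def using \<open>M \<ge> 1\<close> by simp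
    have "ell w / 2 \<le> ell ((K * M) * w)" using elim(1) unfolding w_def by simp
    then have "ell w / 2 \<le> ell (K * y)" unfolding KMw .
    moreover have "ln y - ln w = ln M" unfolding w_def using \<open>M \<ge> 1\<close> elim(2) by (simp add: ln_div)
    then have "ln M / ell w \<le> Phi y"
      using Phi_diff_bounds[OF w] Phi_nonneg[OF w(1)] by simp
    ultimately have "ln M / ell w * (ell w / 2) \<le> Phi y * ell (K * y)"
      using ell_pos[of w] \<open>ln M = 2 * max B 0\<close> Phi_nonneg[of y] w by (intro mult_mono) auto
    then show ?case using ell_pos[of w] \<open>ln M = 2 * max B 0\<close> by simp
  qed
qed

lemma eventually_Phi_gap_imp_far:
  assumes "c > 0" "K \<ge> 1" "C \<ge> 0"
  shows "eventually (\<lambda>y. \<forall>z\<ge>1. (1 + c) * Phi y - C \<le> Phi z \<longrightarrow> K * y < z) at_top"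
proof -
  have "eventually (\<lambda>y. Phi y * ell (K * y) > (ln K + C) / c) at_top"
    using Phi_mul_ell_tendsto_infinity[OF assms(2)] unfolding filterlim_at_top_dense by blast
  with eventually_ge_at_top[of 1] show ?thesis
  proof eventually_elim
    case (elim y)
    show ?case
    proof (intro allI impI, rule ccontr)
      fix z assume z: "z \<ge> 1" "(1 + c) * Phi y - C \<le> Phi z" and "\<not> K * y < z"
      then have "Phi z \<le> Phi (K * y)" using elim by (intro Phi_mono) auto
      also have "\<dots> \<le> Phi y + ln K / ell (K * y)"
        using Phi_diff_bounds[of y "K * y"] elim assms by (simp add: ln_mult)
      finally have "c * Phi y * ell (K * y) \<le> (ln K / ell (K * y) + C) * ell (K * y)"
        using z ell_pos[of "K * y"] by (intro mult_right_mono) (auto simp: algebra_simps)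
      also have "\<dots> = ln K + C * ell (K * y)" using ell_pos[of "K * y"] by (simp add: field_simps)
      also have "\<dots> \<le> ln K + C"
        using mult_left_le[OF ell_le_1 \<open>C \<ge> 0\<close>, of "K * y"] by simp
      finally show False using elim assms by (simp add: field_simps)
    qed
  qed
qed

lemma eventually_Phi_gap_imp_near:
  assumes "c > 0" "K \<ge> 1" "C \<ge> 0"
  shows "eventually (\<lambda>y. \<forall>z\<ge>1. Phi z \<le> (1 - c) * Phi y + C \<longrightarrow> K * z < y) at_top"
proof -
  have "eventually (\<lambda>y. Phi y * ell (1 * y) > (ln K + C) / c) at_top"
    using Phi_mul_ell_tendsto_infinity[of 1] unfolding filterlim_at_top_dense by simp
  with eventually_ge_at_top[of K] show ?thesis
  proof eventually_elim
    case (elim y)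
    show ?case
    proof (intro allI impI, rule ccontr)
      fix z assume z: "z \<ge> 1" "Phi z \<le> (1 - c) * Phi y + C" and "\<not> K * z < y"
      then have "Phi (y / K) \<le> Phi z" using elim assms by (intro Phi_mono) (auto simp: field_simps)
      moreover have "Phi y - Phi (y / K) \<le> ln K / ell y"
        using Phi_diff_bounds[of "y / K" y] elim assms by (simp add: ln_div field_simps)
      ultimately have "c * Phi y * ell y \<le> (ln K / ell y + C) * ell y"
        using z ell_pos[of y] by (intro mult_right_mono) (auto simp: algebra_simps)
      also have "\<dots> = ln K + C * ell y" using ell_pos[of y] by (simp add: field_simps)
      also have "\<dots> \<le> ln K + C"
        using mult_left_le[OF ell_le_1 \<open>C \<ge> 0\<close>, of y] by simp
      finally show False using elim assms by (simp add: field_simps)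
    qed
  qed
qed

lemma Phi_inv_survival_ceiling_ge:
  assumes "\<epsilon> > 0"
  obtains C where "C \<ge> 0" "\<And>y. (1 + \<epsilon> / 2) * Phi y - C \<le> Phi (1 / Q (nat \<lceil>(1 + \<epsilon>) * Phi y\<rceil>))"
proof -
  define \<eta> where "\<eta> = \<epsilon> / (2 * (1 + \<epsilon>))"
  have \<eta>: "\<eta> > 0" "\<eta> < 1" "(1 - \<eta>) * (1 + \<epsilon>) = 1 + \<epsilon> / 2"
    using assms unfolding \<eta>_def by (auto simp: field_simps)
  obtain C where "C \<ge> 0" and C: "\<And>m. (1 - \<eta>) * real m - C \<le> Phi (1 / Q m)"
    using Phi_inv_survival_linear[OF \<eta>(1)] by blast
  have "(1 + \<epsilon> / 2) * Phi y - C \<le> Phi (1 / Q (nat \<lceil>(1 + \<epsilon>) * Phi y\<rceil>))" for y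
  proof -
    have "(1 - \<eta>) * ((1 + \<epsilon>) * Phi y) \<le> (1 - \<eta>) * real (nat \<lceil>(1 + \<epsilon>) * Phi y\<rceil>)"
      using \<eta> by (intro mult_left_mono real_nat_ceiling_ge) auto
    then show ?thesis using C[of "nat \<lceil>(1 + \<epsilon>) * Phi y\<rceil>"] \<eta>(3) by (simp add: mult.assoc[symmetric])
  qed
  with \<open>C \<ge> 0\<close> show ?thesis using that by blast
qed

lemma Phi_inv_survival_ceiling_le:
  assumes "0 < \<epsilon>" "\<epsilon> < 1"
  obtains C where "C \<ge> 0" "\<And>y. y \<ge> 1 \<Longrightarrow> Phi (1 / Q (nat \<lceil>(1 - \<epsilon>) * Phi y\<rceil>)) \<le> (1 - \<epsilon> / 2) * Phi y + C"
proof -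
  define \<eta> where "\<eta> = \<epsilon> / (2 * (1 - \<epsilon>))"
  have \<eta>: "\<eta> > 0" "(1 + \<eta>) * (1 - \<epsilon>) = 1 - \<epsilon> / 2"
    using assms unfolding \<eta>_def by (auto simp: field_simps)
  obtain C where "C \<ge> 0" and C: "\<And>m. Phi (1 / Q m) \<le> (1 + \<eta>) * real m + C"
    using Phi_inv_survival_linear[OF \<eta>(1)] by blast
  have "Phi (1 / Q (nat \<lceil>(1 - \<epsilon>) * Phi y\<rceil>)) \<le> (1 - \<epsilon> / 2) * Phi y + (C + 1 + \<eta>)" if "y \<ge> 1" for y
  proof -
    have "0 \<le> (1 - \<epsilon>) * Phi y" using assms Phi_nonneg[OF that] by simp
    then have "real (nat \<lceil>(1 - \<epsilon>) * Phi y\<rceil>) \<le> (1 - \<epsilon>) * Phi y + 1" by linarith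
    then have "(1 + \<eta>) * real (nat \<lceil>(1 - \<epsilon>) * Phi y\<rceil>) \<le> (1 + \<eta>) * ((1 - \<epsilon>) * Phi y + 1)"
      using \<eta> by (intro mult_left_mono) auto
    also have "\<dots> = ((1 + \<eta>) * (1 - \<epsilon>)) * Phi y + (1 + \<eta>)" by (simp add: algebra_simps)
    also have "\<dots> = (1 - \<epsilon> / 2) * Phi y + (1 + \<eta>)" by (simp only: \<eta>(2))
    finally show ?thesis using C[of "nat \<lceil>(1 - \<epsilon>) * Phi y\<rceil>"] by linarith
  qed
  moreover have "C + 1 + \<eta> \<ge> 0" using \<open>C \<ge> 0\<close> \<eta> by simp
  ultimately show ?thesis using that by blast
qed

text \<open>At \<open>m = \<lceil>(1 + \<epsilon>) Phi y\<rceil>\<close> the value \<open>Phi (1 / Q m)\<close> exceeds \<open>Phi y\<close> by a fixed fraction of \<open>Phi y\<close>,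
  which forces \<open>1 / Q m \<ge> K y\<close> for every \<open>K\<close>.\<close>
lemma mul_survival_ceiling_Phi_tendsto_0:
  assumes y: "filterlim y at_top F" and "\<epsilon> > 0"
  shows "((\<lambda>n. y n * Q (nat \<lceil>(1 + \<epsilon>) * Phi (y n)\<rceil>)) \<longlongrightarrow> 0) F"
proof (rule tendstoI)
  fix r :: real assume "r > 0"
  obtain C where "C \<ge> 0" and C: "\<And>y. (1 + \<epsilon> / 2) * Phi y - C \<le> Phi (1 / Q (nat \<lceil>(1 + \<epsilon>) * Phi y\<rceil>))"
    using Phi_inv_survival_ceiling_ge[OF \<open>\<epsilon> > 0\<close>] by blast
  define K where "K = max 1 (2 / r)"
  have "K \<ge> 1" "1 / K < r" using \<open>r > 0\<close> unfolding K_def by (auto simp: field_simps max_def)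
  have "eventually (\<lambda>n. y n \<ge> 1 \<and> (\<forall>z\<ge>1. (1 + \<epsilon> / 2) * Phi (y n) - C \<le> Phi z \<longrightarrow> K * y n < z)) F"
    using filterlim_iff[THEN iffD1, OF y, rule_format, OF eventually_conj[OF eventually_ge_at_top[of 1]
          eventually_Phi_gap_imp_far[OF _ \<open>K \<ge> 1\<close> \<open>C \<ge> 0\<close>]]] \<open>\<epsilon> > 0\<close>
    by simp
  then show "eventually (\<lambda>n. dist (y n * Q (nat \<lceil>(1 + \<epsilon>) * Phi (y n)\<rceil>)) 0 < r) F"
  proof eventually_elim
    case (elim n)
    define m where "m = nat \<lceil>(1 + \<epsilon>) * Phi (y n)\<rceil>"
    have "1 \<le> 1 / Q m" using survival_pos[of m] survival_bounds[of \<mu> m] by simp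
    then have "K * y n < 1 / Q m" using elim C[of "y n"] unfolding m_def by blast
    then have "y n * Q m < 1 / K" using \<open>K \<ge> 1\<close> survival_pos[of m] by (simp add: field_simps)
    then show ?case unfolding m_def[symmetric] using \<open>1 / K < r\<close> elim survival_pos[of m] by simp
  qed
qed

text \<open>Symmetrically, at \<open>m = \<lceil>(1 - \<epsilon>) Phi y\<rceil>\<close> the value \<open>Phi (1 / Q m)\<close> falls short of \<open>Phi y\<close> by a
  fixed fraction, which forces \<open>1 / Q m \<le> y / K\<close>.\<close>
lemma mul_survival_ceiling_Phi_tendsto_infinity:
  assumes y: "filterlim y at_top F" and "\<epsilon> > 0"
  shows "filterlim (\<lambda>n. y n * Q (nat \<lceil>(1 - \<epsilon>) * Phi (y n)\<rceil>)) at_top F"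
proof (cases "\<epsilon> \<ge> 1")
  case True
  have "eventually (\<lambda>n. y n \<le> y n * Q (nat \<lceil>(1 - \<epsilon>) * Phi (y n)\<rceil>)) F"
    using filterlim_iff[THEN iffD1, OF y, rule_format, OF eventually_ge_at_top[of 1]]
  proof eventually_elim
    case (elim n)
    then have "(1 - \<epsilon>) * Phi (y n) \<le> 0"
      using True Phi_nonneg[of "y n"] by (simp add: mult_nonpos_nonneg)
    then show ?case by simp
  qed
  then show ?thesis by (rule filterlim_at_top_mono[OF y])
next
  case False
  obtain C where "C \<ge> 0"
    and C: "\<And>y. y \<ge> 1 \<Longrightarrow> Phi (1 / Q (nat \<lceil>(1 - \<epsilon>) * Phi y\<rceil>)) \<le> (1 - \<epsilon> / 2) * Phi y + C"
    using Phi_inv_survival_ceiling_le[OF \<open>\<epsilon> > 0\<close>] False by auto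
  show ?thesis
    unfolding filterlim_at_top
  proof
    fix B :: real
    define K where "K = max 1 B"
    have "K \<ge> 1" "B \<le> K" unfolding K_def by auto
    have "eventually (\<lambda>n. y n \<ge> 1 \<and> (\<forall>z\<ge>1. Phi z \<le> (1 - \<epsilon> / 2) * Phi (y n) + C \<longrightarrow> K * z < y n)) F"
      using filterlim_iff[THEN iffD1, OF y, rule_format, OF eventually_conj[OF eventually_ge_at_top[of 1]
            eventually_Phi_gap_imp_near[OF _ \<open>K \<ge> 1\<close> \<open>C \<ge> 0\<close>]]] \<open>\<epsilon> > 0\<close>
      by simp
    then show "eventually (\<lambda>n. B \<le> y n * Q (nat \<lceil>(1 - \<epsilon>) * Phi (y n)\<rceil>)) F"
    proof eventually_elim
      case (elim n)
      define m where "m = nat \<lceil>(1 - \<epsilon>) * Phi (y n)\<rceil>"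
      have "1 \<le> 1 / Q m" using survival_pos[of m] survival_bounds[of \<mu> m] by simp
      then have "K * (1 / Q m) < y n" using elim C[of "y n"] unfolding m_def by blast
      then have "K \<le> y n * Q m" using survival_pos[of m] by (simp add: field_simps)
      then show ?case unfolding m_def using \<open>B \<le> K\<close> by simp
    qed
  qed
qed

section \<open>The norming sequences\<close>

lemma tail_threshold_tendsto_infinity:
  assumes "(\<lambda>n. real n * measure_pmf.prob \<mu> {k. real k \<ge> a n}) \<longlonglongrightarrow> 1"
  shows "filterlim a at_top sequentially"
  unfolding filterlim_at_top
proof
  fix Z :: real
  define T where "T x = measure_pmf.prob \<mu> {k. real k \<ge> x}" for x
  have "(\<lambda>n. (real n * T (a n)) * inverse (real n)) \<longlonglongrightarrow> 1 * 0"
    unfolding T_def by (intro tendsto_mult assms tendsto_inverse_0_at_top filterlim_real_sequentially)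
  moreover have "eventually (\<lambda>n. (real n * T (a n)) * inverse (real n) = T (a n)) sequentially"
    using eventually_gt_at_top[of "0 :: nat"] by eventually_elim simp
  ultimately have "(\<lambda>n. T (a n)) \<longlonglongrightarrow> 0" by (simp add: Lim_transform_eventually)
  then have "eventually (\<lambda>n. T (a n) < T Z) sequentially"
    using tail_pos[of Z] unfolding T_def by (intro order_tendstoD(2)) auto
  then show "eventually (\<lambda>n. Z \<le> a n) sequentially"
  proof eventually_elim
    case (elim n)
    show ?case
    proof (rule ccontr)
      assume "\<not> Z \<le> a n"
      then have "T Z \<le> T (a n)" unfolding T_def by (intro measure_pmf.finite_measure_mono) auto
      then show False using elim by simp
    qed
  qed
qed

lemma n_mul_ell_threshold_tendsto_infinity:
  assumes "(\<lambda>n. real n * measure_pmf.prob \<mu> {k. real k \<ge> a n}) \<longlonglongrightarrow> 1"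
  shows "filterlim (\<lambda>n. real n * ell (a n)) at_top sequentially"
proof (rule filterlim_at_top_mono)
  show "filterlim (\<lambda>n. a n * (1 / 2)) at_top sequentially"
    using tail_threshold_tendsto_infinity[OF assms]
    by (intro filterlim_at_top_mult_tendsto_pos[OF tendsto_const]) auto
  have "eventually (\<lambda>n. real n * measure_pmf.prob \<mu> {k. real k \<ge> a n} > 1 / 2) sequentially"
    using assms by (intro order_tendstoD(1)) auto
  moreover have "eventually (\<lambda>n. a n \<ge> 0) sequentially"
    using tail_threshold_tendsto_infinity[OF assms] unfolding filterlim_at_top by blast
  ultimately show "eventually (\<lambda>n. a n * (1 / 2) \<le> real n * ell (a n)) sequentially"
  proof eventually_elim
    case (elim n)
    have "a n * (1 / 2) \<le> a n * (real n * measure_pmf.prob \<mu> {k. real k \<ge> a n})"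
      using elim by (intro mult_left_mono) auto
    also have "\<dots> = real n * (a n * measure_pmf.prob \<mu> {k. real k \<ge> a n})" by (simp add: mult_ac)
    also have "\<dots> \<le> real n * ell (a n)" using mul_tail_le_ell elim by (intro mult_left_mono) auto
    finally show ?case .
  qed
qed

lemma excess_expectation_sums:
  "(\<lambda>k. pmf \<mu> k * ((real k - 1) * (if \<bar>real k - 1\<bar> > A then 1 else 0))) sums
    measure_pmf.expectation \<mu> (\<lambda>k. (real k - 1) * (if \<bar>real k - 1\<bar> > A then 1 else 0))"
proof (rule pmf_nat_expectation_sums)
  have "summable (\<lambda>k. real k * pmf \<mu> k + pmf \<mu> k)"
    by (intro summable_add sums_summable[OF mean_sums_1] summable_pmf_nat)
  then show "summable (\<lambda>k. pmf \<mu> k * \<bar>(real k - 1) * (if \<bar>real k - 1\<bar> > A then 1 else 0)\<bar>)"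
  proof (rule summable_comparison_test'[where N=0])
    fix k :: nat
    have "pmf \<mu> k * \<bar>(real k - 1) * (if \<bar>real k - 1\<bar> > A then 1 else 0)\<bar> \<le> pmf \<mu> k * (real k + 1)"
      by (intro mult_left_mono) auto
    then show "norm (pmf \<mu> k * \<bar>(real k - 1) * (if \<bar>real k - 1\<bar> > A then 1 else 0)\<bar>)
        \<le> real k * pmf \<mu> k + pmf \<mu> k"
      by (simp add: algebra_simps abs_mult)
  qed
qed

lemma b_seq_bounds:
  assumes "a n \<ge> 2"
  shows "real n * ell (a n + 2) / 2 \<le> b_seq \<mu> a n \<and> b_seq \<mu> a n \<le> real n * ell (a n)"
proof -
  let ?E = "measure_pmf.expectation \<mu> (\<lambda>k. (real k - 1) * (if \<bar>real k - 1\<bar> > a n then 1 else 0))"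
  have upper: "?E \<le> ell (a n)"
  proof (rule sums_le[OF _ excess_expectation_sums trunc_mean_sums])
    fix k
    show "pmf \<mu> k * ((real k - 1) * (if \<bar>real k - 1\<bar> > a n then 1 else 0))
      \<le> (if a n \<le> real k then real k * pmf \<mu> k else 0)"
      using assms by (auto simp: algebra_simps mult_left_mono)
  qed
  have lower: "1 / 2 * ell (a n + 2) \<le> ?E"
  proof (rule sums_le[OF _ sums_mult[OF trunc_mean_sums] excess_expectation_sums])
    fix k
    show "1 / 2 * (if a n + 2 \<le> real k then real k * pmf \<mu> k else 0)
      \<le> pmf \<mu> k * ((real k - 1) * (if \<bar>real k - 1\<bar> > a n then 1 else 0))"
    proof (cases "a n + 2 \<le> real k")
      case True
      then have "pmf \<mu> k * (real k / 2) \<le> pmf \<mu> k * (real k - 1)"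
        using assms by (intro mult_left_mono) auto
      then show ?thesis using True assms by (simp add: algebra_simps)
    next
      case False
      have "0 \<le> (real k - 1) * (if \<bar>real k - 1\<bar> > a n then 1 else 0)" using assms by auto
      then show ?thesis using False by simp
    qed
  qed
  have "real n * (1 / 2 * ell (a n + 2)) \<le> real n * ?E" using lower by (rule mult_left_mono) simp
  moreover have "real n * ?E \<le> real n * ell (a n)" using upper by (rule mult_left_mono) simp
  ultimately show ?thesis unfolding b_seq_def by simp
qed

lemma eventually_b_seq_comparable:
  assumes "(\<lambda>n. real n * measure_pmf.prob \<mu> {k. real k \<ge> a n}) \<longlonglongrightarrow> 1"
  shows "eventually (\<lambda>n. real n * ell (a n) / 4 \<le> b_seq \<mu> a n \<and> b_seq \<mu> a n \<le> real n * ell (a n))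
    sequentially"
proof -
  have "eventually (\<lambda>x. (1 - 1 / 2) * ell x \<le> ell (2 * x)) at_top"
    by (intro eventually_ell_dilation_ge) auto
  then have "eventually (\<lambda>x. x \<ge> 2 \<and> (1 - 1 / 2) * ell x \<le> ell (2 * x)) at_top"
    using eventually_ge_at_top[of "2 :: real"] by eventually_elim auto
  from filterlim_iff[THEN iffD1, OF tail_threshold_tendsto_infinity[OF assms], rule_format, OF this]
  show ?thesis
  proof eventually_elim
    case (elim n)
    have "ell (a n) / 2 \<le> ell (a n + 2)"
      using elim ell_antimono[of "a n + 2" "2 * a n"] by simp
    then have "real n * (ell (a n) / 4) \<le> real n * (ell (a n + 2) / 2)"
      by (intro mult_left_mono) auto
    then show ?case using b_seq_bounds[of a n] elim by simp
  qed
qed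

theorem height_tail_at_scaled_h_seq:
  assumes a: "(\<lambda>n. real n * measure_pmf.prob \<mu> {k. real k \<ge> a n}) \<longlonglongrightarrow> 1" and "\<epsilon> > 0"
  shows "(\<lambda>n. b_seq \<mu> a n * height_tail \<mu> ((1 + \<epsilon>) * h_seq \<mu> a n)) \<longlonglongrightarrow> 0 \<and>
         filterlim (\<lambda>n. b_seq \<mu> a n * height_tail \<mu> ((1 - \<epsilon>) * h_seq \<mu> a n)) at_top sequentially"
proof -
  define y where "y n = real n * ell (a n)" for n
  have y: "filterlim y at_top sequentially"
    unfolding y_def by (rule n_mul_ell_threshold_tendsto_infinity[OF a])
  have tail: "height_tail \<mu> (c * h_seq \<mu> a n) = Q (nat \<lceil>c * Phi (y n)\<rceil>)" for c n
    unfolding height_tail_eq_survival h_seq_def Phi_def y_def ..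
  have b: "eventually (\<lambda>n. y n / 4 \<le> b_seq \<mu> a n \<and> b_seq \<mu> a n \<le> y n) sequentially"
    unfolding y_def by (rule eventually_b_seq_comparable[OF a])
  have "(\<lambda>n. b_seq \<mu> a n * Q (nat \<lceil>(1 + \<epsilon>) * Phi (y n)\<rceil>)) \<longlonglongrightarrow> 0"
  proof (rule tendsto_sandwich[OF _ _ tendsto_const mul_survival_ceiling_Phi_tendsto_0[OF y \<open>\<epsilon> > 0\<close>]])
    show "eventually (\<lambda>n. 0 \<le> b_seq \<mu> a n * Q (nat \<lceil>(1 + \<epsilon>) * Phi (y n)\<rceil>)) sequentially"
      using b y unfolding filterlim_at_top
      by (auto elim!: eventually_mono intro!: mult_nonneg_nonneg less_imp_le[OF survival_pos])
    show "eventually (\<lambda>n. b_seq \<mu> a n * Q (nat \<lceil>(1 + \<epsilon>) * Phi (y n)\<rceil>)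
        \<le> y n * Q (nat \<lceil>(1 + \<epsilon>) * Phi (y n)\<rceil>)) sequentially"
      using b by eventually_elim (auto intro!: mult_right_mono less_imp_le[OF survival_pos])
  qed
  moreover have "filterlim (\<lambda>n. b_seq \<mu> a n * Q (nat \<lceil>(1 - \<epsilon>) * Phi (y n)\<rceil>)) at_top sequentially"
  proof (rule filterlim_at_top_mono)
    show "filterlim (\<lambda>n. y n * Q (nat \<lceil>(1 - \<epsilon>) * Phi (y n)\<rceil>) * (1 / 4)) at_top sequentially"
      by (intro filterlim_at_top_mult_tendsto_pos[OF tendsto_const]
          mul_survival_ceiling_Phi_tendsto_infinity[OF y \<open>\<epsilon> > 0\<close>]) auto
    show "eventually (\<lambda>n. y n * Q (nat \<lceil>(1 - \<epsilon>) * Phi (y n)\<rceil>) * (1 / 4)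
        \<le> b_seq \<mu> a n * Q (nat \<lceil>(1 - \<epsilon>) * Phi (y n)\<rceil>)) sequentially"
    proof (use b in eventually_elim)
      case (elim n)
      have "y n / 4 * Q (nat \<lceil>(1 - \<epsilon>) * Phi (y n)\<rceil>) \<le> b_seq \<mu> a n * Q (nat \<lceil>(1 - \<epsilon>) * Phi (y n)\<rceil>)"
        using elim by (intro mult_right_mono less_imp_le[OF survival_pos]) auto
      then show ?case by simp
    qed
  qed
  ultimately show ?thesis unfolding tail by simp
qed

end

theorem mainTheorem7:
  fixes \<mu> :: "nat pmf" and a :: "nat \<Rightarrow> real" and \<epsilon> :: real
  assumes "H_mu \<mu>"
    and "(\<lambda>n. real n * measure_pmf.prob \<mu> {k. real k \<ge> a n}) \<longlonglongrightarrow> 1"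
    and "\<epsilon> > 0"
  shows "(\<lambda>n. b_seq \<mu> a n * height_tail \<mu> ((1 + \<epsilon>) * h_seq \<mu> a n)) \<longlonglongrightarrow> 0 \<and>
         filterlim (\<lambda>n. b_seq \<mu> a n * height_tail \<mu> ((1 - \<epsilon>) * h_seq \<mu> a n)) at_top sequentially"
proof -
  obtain L where "cauchy_offspring \<mu> L"
    using assms(1) unfolding H_mu_def cauchy_offspring_def by blast
  then show ?thesis using cauchy_offspring.height_tail_at_scaled_h_seq assms(2,3) by blast
qed

end
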